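(* For every positive integer $N>1$, \[ \mathfrak{C}_2(N) = K(2N)^5 + O(N^4\log N), \qquad \text{where } K = \frac{10\zeta(2)}{3\zeta(3)}, \] and the implied constant is absolute.
   Context: For positive integers $d,N$, let $\mathrm{Mat}_d(\mathbb{Z},N)$ denote the set of $d\times d$ matrices with all entries in $[-N,N]\cap\mathbb{Z}$, and let $\mathfrak{C}_d(N)$ be the number of pairs $(A,B)\in \mathrm{Mat}_d(\mathbb{Z},N)^2$ with $AB=BA$. Here $\zeta$ is the Riemann zeta function. *)

theory Defs
  imports "HOL-Analysis.Analysis"
begin

definition zeta_real :: "real \<Rightarrow> real" where
  "zeta_real s = (\<Sum>n. 1 / (real (Suc n)) powr s)"

definition bounded_mats :: "nat \<Rightarrow> (int ^ 'd ^ 'd) set" where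
  "bounded_mats N = {A. \<forall>i j. \<bar>A $ i $ j\<bar> \<le> int N}"

definition commuting_count :: "('d::finite) itself \<Rightarrow> nat \<Rightarrow> nat" where
  "commuting_count _ N =
     card {(A, B). A \<in> (bounded_mats N :: (int ^ 'd ^ 'd) set) \<and> B \<in> bounded_mats N \<and> A ** B = B ** A}"

end

theory Submission
  imports Defs "HOL-Analysis.Harmonic_Numbers"
begin

text \<open>Two 2 x 2 matrices commute iff the vectors (a - d, b, c) formed from their entries are
  parallel. Counting the matrices in the box by this vector turns C_2(N) into a sum of
  w(x) w(y) over parallel pairs, where w(x) = t(x1) [|x2| <= N] [|x3| <= N] (fibre_weight) with
  the tent t(x) = max 0 (2 N + 1 - |x|). Pairs containing the zero vector give
  2 (2 N + 1)^5 - (2 N + 1)^2. Every other parallel pair is (k m, l m) for a unique m and a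
  unique coprime pair (k, l) with k > 0, so the rest is twice a sum, over coprime
  1 <= k, l <= 2 N, of the ray sums X(k, l) = sum of w(k m) w(l m) over m != 0 (ray_sum).
  A ray sum factorises into a one-dimensional tent correlation and two interval counts, which
  gives X(k, l) = (2 N)^5 f(k, l) + O(N^4 / c^2) with c = max k l, d = min k l and
  f(k, l) = 1 / c^3 - d / (3 c^4) (pair_density); the errors add up to O(N^4 log N).
  Summing f over the shells max k l = j shows that its sum over all positive pairs is
  5/3 zeta(2) - zeta(3); as f is homogeneous of degree -3 this is zeta(3) times its sum S over
  coprime pairs (coprime_density), whose tail beyond 2 N is O(1/N). Hence
  C_2(N) = 2 (1 + S) (2 N)^5 + O(N^4 log N), and 2 (1 + S) = 10 zeta(2) / (3 zeta(3)).\<close>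

section \<open>Commuting matrices and parallel vectors\<close>

definition mat2 :: "'a :: zero \<times> 'a \<times> 'a \<times> 'a \<Rightarrow> 'a ^ 2 ^ 2" where
  "mat2 = (\<lambda>(a, b, c, d). vector [vector [a, b], vector [c, d]])"

lemma mat2_nth [simp]:
  "mat2 (a, b, c, d) $ 1 $ 1 = a" "mat2 (a, b, c, d) $ 1 $ 2 = b"
  "mat2 (a, b, c, d) $ 2 $ 1 = c" "mat2 (a, b, c, d) $ 2 $ 2 = d"
  unfolding mat2_def by simp_all

lemma mat2_eq_iff: "(A :: 'a ^ 2 ^ 2) = B \<longleftrightarrow> A$1$1 = B$1$1 \<and> A$1$2 = B$1$2 \<and> A$2$1 = B$2$1 \<and> A$2$2 = B$2$2"
  by (auto simp: vec_eq_iff forall_2)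

lemma mat2_entries: "mat2 (A$1$1, A$1$2, A$2$1, A$2$2) = A"
  by (simp add: mat2_eq_iff)

lemma inj_mat2: "inj mat2"
  by (rule injI) (auto simp: mat2_eq_iff)

lemma mat2_mult_nth:
  "(mat2 p ** mat2 q) $ i $ j = mat2 p $ i $ 1 * mat2 q $ 1 $ j + mat2 p $ i $ 2 * mat2 q $ 2 $ j"
  by (simp add: matrix_matrix_mult_def sum_2)

definition parallel3 :: "'a :: comm_ring \<times> 'a \<times> 'a \<Rightarrow> 'a \<times> 'a \<times> 'a \<Rightarrow> bool" where
  "parallel3 = (\<lambda>(x1, x2, x3) (y1, y2, y3). x2 * y3 = x3 * y2 \<and> x1 * y2 = x2 * y1 \<and> x1 * y3 = x3 * y1)"

definition comm_vec :: "'a :: ring \<times> 'a \<times> 'a \<times> 'a \<Rightarrow> 'a \<times> 'a \<times> 'a" where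
  "comm_vec = (\<lambda>(a, b, c, d). (a - d, b, c))"

text \<open>Subtracting d I from (a b; c d) does not change its commutators, and the commutator of
  (x y; z 0) with (x' y'; z' 0) vanishes iff (x, y, z) and (x', y', z') are parallel.\<close>
lemma mat2_commute_iff:
  fixes p q :: "'a :: comm_ring_1 \<times> 'a \<times> 'a \<times> 'a"
  shows "mat2 p ** mat2 q = mat2 q ** mat2 p \<longleftrightarrow> parallel3 (comm_vec p) (comm_vec q)"
proof -
  obtain a b c d where p: "p = (a, b, c, d)"
    by (cases p) auto
  obtain e f g h where q: "q = (e, f, g, h)"
    by (cases q) auto
  show ?thesis
    unfolding p q mat2_eq_iff mat2_mult_nth mat2_nth parallel3_def comm_vec_def
    by (auto simp: algebra_simps)
qed

definition box4 :: "int \<Rightarrow> (int \<times> int \<times> int \<times> int) set" where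
  "box4 n = {-n..n} \<times> {-n..n} \<times> {-n..n} \<times> {-n..n}"

lemma finite_box4: "finite (box4 n)"
  by (simp add: box4_def)

lemma bounded_mats_2_eq: "bounded_mats N = mat2 ` box4 (int N)"
proof (intro equalityI subsetI)
  fix A :: "int ^ 2 ^ 2"
  assume "A \<in> bounded_mats N"
  then have "\<bar>A$1$1\<bar> \<le> int N" "\<bar>A$1$2\<bar> \<le> int N" "\<bar>A$2$1\<bar> \<le> int N" "\<bar>A$2$2\<bar> \<le> int N"
    unfolding bounded_mats_def by blast+
  then have "(A$1$1, A$1$2, A$2$1, A$2$2) \<in> box4 (int N)"
    by (simp add: box4_def abs_le_iff)
  then show "A \<in> mat2 ` box4 (int N)"
    by (metis mat2_entries image_eqI)
next
  fix A :: "int ^ 2 ^ 2"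
  assume "A \<in> mat2 ` box4 (int N)"
  then obtain a b c d where "A = mat2 (a, b, c, d)" "(a, b, c, d) \<in> box4 (int N)"
    by auto
  then show "A \<in> bounded_mats N"
    by (auto simp: bounded_mats_def box4_def forall_2)
qed

lemma commuting_count_2_eq_card:
  "commuting_count TYPE(2) N =
     card {(p, q). p \<in> box4 (int N) \<and> q \<in> box4 (int N) \<and> parallel3 (comm_vec p) (comm_vec q)}"
proof -
  let ?S = "{(p, q). p \<in> box4 (int N) \<and> q \<in> box4 (int N) \<and> parallel3 (comm_vec p) (comm_vec q)}"
  have "{(A, B). A \<in> (bounded_mats N :: (int ^ 2 ^ 2) set) \<and> B \<in> bounded_mats N \<and> A ** B = B ** A}
      = map_prod mat2 mat2 ` ?S"
    by (auto simp: bounded_mats_2_eq mat2_commute_iff image_iff)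
  moreover have "inj_on (map_prod mat2 mat2) ?S"
    using prod.inj_map[OF inj_mat2 inj_mat2] by (rule inj_on_subset) simp
  ultimately show ?thesis
    unfolding commuting_count_def by (simp add: card_image)
qed

section \<open>Counting matrices by their commutation vectors\<close>

definition tent :: "int \<Rightarrow> int \<Rightarrow> int" where
  "tent n x = max 0 (2 * n + 1 - \<bar>x\<bar>)"

definition box3 :: "int \<Rightarrow> (int \<times> int \<times> int) set" where
  "box3 n = {-2 * n..2 * n} \<times> {-n..n} \<times> {-n..n}"

definition fibre_weight :: "int \<Rightarrow> int \<times> int \<times> int \<Rightarrow> int" where
  "fibre_weight n = (\<lambda>(x1, x2, x3). tent n x1 * of_bool (\<bar>x2\<bar> \<le> n) * of_bool (\<bar>x3\<bar> \<le> n))"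

lemma finite_box3: "finite (box3 n)"
  by (simp add: box3_def)

lemma fibre_weight_neq_0_imp_mem_box3: "fibre_weight n x \<noteq> 0 \<Longrightarrow> x \<in> box3 n"
  by (cases x) (auto simp: fibre_weight_def tent_def box3_def abs_le_iff)

lemma card_diff_eq_tent:
  assumes "n \<ge> 0"
  shows "int (card {(a, d). a \<in> {-n..n} \<and> d \<in> {-n..n} \<and> a - d = x}) = tent n x"
proof -
  have "{(a, d). a \<in> {-n..n} \<and> d \<in> {-n..n} \<and> a - d = x} = (\<lambda>d. (d + x, d)) ` {max (-n) (-n - x)..min n (n - x)}"
    by (auto simp: image_iff)
  moreover have "inj (\<lambda>d::int. (d + x, d))"
    by (auto simp: inj_def)
  ultimately have "card {(a, d). a \<in> {-n..n} \<and> d \<in> {-n..n} \<and> a - d = x} = card {max (-n) (-n - x)..min n (n - x)}"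
    by (simp add: card_image inj_on_def)
  also have "int \<dots> = tent n x"
    unfolding tent_def by (auto simp: max_def min_def)
  finally show ?thesis .
qed

lemma card_fibre_comm_vec:
  assumes n: "n \<ge> 0"
  shows "int (card {p \<in> box4 n. comm_vec p = x}) = fibre_weight n x"
proof -
  obtain x1 x2 x3 where x: "x = (x1, x2, x3)"
    by (cases x) auto
  show ?thesis
  proof (cases "\<bar>x2\<bar> \<le> n \<and> \<bar>x3\<bar> \<le> n")
    case True
    then have "{p \<in> box4 n. comm_vec p = x}
        = (\<lambda>(a, d). (a, x2, x3, d)) ` {(a, d). a \<in> {-n..n} \<and> d \<in> {-n..n} \<and> a - d = x1}"
      unfolding x box4_def comm_vec_def by (auto simp: image_iff abs_le_iff)
    moreover have "inj_on (\<lambda>(a, d). (a, x2, x3, d)) A" for A :: "(int \<times> int) set"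
      by (auto simp: inj_on_def)
    ultimately show ?thesis
      using card_diff_eq_tent[OF n, of x1] True by (simp add: card_image x fibre_weight_def)
  next
    case False
    have "{p \<in> box4 n. comm_vec p = x} = {}"
      using False unfolding x box4_def comm_vec_def by (auto simp: abs_le_iff)
    moreover have "fibre_weight n x = 0"
      using False by (auto simp: x fibre_weight_def)
    ultimately show ?thesis
      by (simp only:) simp
  qed
qed

lemma sum_comp_by_fibres:
  fixes G :: "'b \<Rightarrow> 'c :: comm_semiring_1"
  assumes "finite S" "finite T" "f ` S \<subseteq> T"
  shows "(\<Sum>p\<in>S. G (f p)) = (\<Sum>x\<in>T. of_nat (card {p \<in> S. f p = x}) * G x)"
proof -
  have "(\<Sum>p\<in>S. G (f p)) = (\<Sum>x\<in>T. \<Sum>p\<in>{p \<in> S. f p = x}. G (f p))"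
    by (rule sum.group[symmetric]) (use assms in auto)
  also have "\<dots> = (\<Sum>x\<in>T. of_nat (card {p \<in> S. f p = x}) * G x)"
    by (rule sum.cong[OF refl]) simp
  finally show ?thesis .
qed

lemma sum_comm_vec_box4:
  fixes G :: "int \<times> int \<times> int \<Rightarrow> int"
  assumes "n \<ge> 0"
  shows "(\<Sum>p\<in>box4 n. G (comm_vec p)) = (\<Sum>x\<in>box3 n. fibre_weight n x * G x)"
proof -
  have "comm_vec ` box4 n \<subseteq> box3 n"
    by (auto simp: box4_def box3_def comm_vec_def)
  then show ?thesis
    using sum_comp_by_fibres[OF finite_box4 finite_box3, where f = comm_vec and G = G]
      card_fibre_comm_vec[OF assms]
    by simp
qed

lemma sum_fibre_weight:
  assumes "n \<ge> 0"
  shows "(\<Sum>x\<in>box3 n. fibre_weight n x) = (2 * n + 1) ^ 4"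
  using sum_comm_vec_box4[OF assms, of "\<lambda>_. 1"] assms
  by (simp add: box4_def card_cartesian_product eval_nat_numeral)

lemma commuting_count_2_eq_sum_weight:
  "int (commuting_count TYPE(2) N)
     = (\<Sum>x\<in>box3 (int N). \<Sum>y\<in>box3 (int N).
          fibre_weight (int N) x * fibre_weight (int N) y * of_bool (parallel3 x y))"
proof -
  let ?n = "int N"
  have n: "?n \<ge> 0"
    by simp
  let ?P = "\<lambda>z. parallel3 (comm_vec (fst z)) (comm_vec (snd z))"
  have "{(p, q). p \<in> box4 ?n \<and> q \<in> box4 ?n \<and> parallel3 (comm_vec p) (comm_vec q)}
      = (box4 ?n \<times> box4 ?n) \<inter> {z. ?P z}"
    by auto
  then have "int (commuting_count TYPE(2) N) = (\<Sum>z\<in>box4 ?n \<times> box4 ?n. of_bool (?P z))"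
    unfolding commuting_count_2_eq_card by (simp add: finite_box4)
  also have "\<dots> = (\<Sum>p\<in>box4 ?n. \<Sum>q\<in>box4 ?n. of_bool (parallel3 (comm_vec p) (comm_vec q)))"
    by (simp only: sum.cartesian_product' fst_conv snd_conv)
  also have "\<dots> = (\<Sum>p\<in>box4 ?n. \<Sum>y\<in>box3 ?n. fibre_weight ?n y * of_bool (parallel3 (comm_vec p) y))"
    by (intro sum.cong refl sum_comm_vec_box4[OF n])
  also have "\<dots> = (\<Sum>x\<in>box3 ?n. fibre_weight ?n x * (\<Sum>y\<in>box3 ?n. fibre_weight ?n y * of_bool (parallel3 x y)))"
    by (rule sum_comm_vec_box4[OF n])
  also have "\<dots> = (\<Sum>x\<in>box3 ?n. \<Sum>y\<in>box3 ?n. fibre_weight ?n x * fibre_weight ?n y * of_bool (parallel3 x y))"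
    by (simp add: sum_distrib_left mult.assoc)
  finally show ?thesis .
qed

section \<open>Parametrising parallel pairs\<close>

definition scale3 :: "'a :: times \<Rightarrow> 'a \<times> 'a \<times> 'a \<Rightarrow> 'a \<times> 'a \<times> 'a" where
  "scale3 k = (\<lambda>(x, y, z). (k * x, k * y, k * z))"

lemma scale3_eq_0_iff:
  "scale3 k m = (0, 0, 0) \<longleftrightarrow> k = 0 \<or> m = (0 :: 'a :: {semiring_0, semiring_no_zero_divisors}, 0, 0)"
  by (cases m) (auto simp: scale3_def)

lemma parallel3_scale3: "parallel3 (scale3 k m) (scale3 l m)"
  by (cases m) (simp add: parallel3_def scale3_def algebra_simps)

lemma parallel3_0: "parallel3 (0, 0, 0) y" "parallel3 x (0, 0, 0)"
  by (cases y, simp add: parallel3_def) (cases x, simp add: parallel3_def)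

lemma bezout3: "\<exists>a b c. a * x1 + b * x2 + c * x3 = gcd x1 (gcd x2 (x3 :: int))"
proof -
  obtain p q where "p * x2 + q * x3 = gcd x2 x3"
    using bezout_int by blast
  moreover obtain r w where "r * x1 + w * gcd x2 x3 = gcd x1 (gcd x2 x3)"
    using bezout_int by blast
  ultimately have "r * x1 + (w * p) * x2 + (w * q) * x3 = gcd x1 (gcd x2 x3)"
    by (metis add.assoc distrib_left mult.assoc)
  then show ?thesis
    by blast
qed

lemma parallel3_gcd_multiple:
  fixes x1 x2 x3 y1 y2 y3 :: int
  assumes "parallel3 (x1, x2, x3) (y1, y2, y3)"
  obtains lam where "gcd x1 (gcd x2 x3) * y1 = lam * x1" "gcd x1 (gcd x2 x3) * y2 = lam * x2"
    "gcd x1 (gcd x2 x3) * y3 = lam * x3"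
proof -
  obtain a b c where abc: "a * x1 + b * x2 + c * x3 = gcd x1 (gcd x2 x3)"
    using bezout3 by blast
  then have "gcd x1 (gcd x2 x3) * y1 = (a * y1 + b * y2 + c * y3) * x1"
    "gcd x1 (gcd x2 x3) * y2 = (a * y1 + b * y2 + c * y3) * x2"
    "gcd x1 (gcd x2 x3) * y3 = (a * y1 + b * y2 + c * y3) * x3"
    unfolding abc[symmetric] using assms by (simp_all add: parallel3_def algebra_simps)
  then show ?thesis
    using that by blast
qed

text \<open>With g the gcd of the entries of x and g y = lam x, take k = g / gcd g lam,
  l = lam / gcd g lam and m = x / k.\<close>
lemma parallel3_obtains_scale3:
  fixes x y :: "int \<times> int \<times> int"
  assumes "x \<noteq> (0, 0, 0)" "parallel3 x y"
  obtains k l m where "k \<ge> 1" "coprime k l" "x = scale3 k m" "y = scale3 l m"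
proof -
  obtain x1 x2 x3 y1 y2 y3 where xy: "x = (x1, x2, x3)" "y = (y1, y2, y3)"
    by (metis prod.exhaust)
  define g where "g = gcd x1 (gcd x2 x3)"
  obtain lam where gy: "g * y1 = lam * x1" "g * y2 = lam * x2" "g * y3 = lam * x3"
    using parallel3_gcd_multiple assms(2) unfolding xy g_def by blast
  have g0: "g > 0"
    using assms(1) unfolding g_def xy by auto
  define e where "e = gcd g lam"
  define k where "k = g div e"
  define l where "l = lam div e"
  have e0: "e > 0"
    using g0 unfolding e_def by auto
  have ek: "g = e * k" and el: "lam = e * l"
    unfolding k_def l_def e_def by simp_all
  have k1: "k \<ge> 1"
    using g0 e0 ek by (metis int_one_le_iff_zero_less zero_less_mult_pos)
  have "g dvd x1" "g dvd x2" "g dvd x3"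
    unfolding g_def by (meson dvd_trans gcd_dvd1 gcd_dvd2)+
  then have kd: "k dvd x1" "k dvd x2" "k dvd x3"
    using ek by (auto intro: dvd_trans[of k g])
  have "coprime k l"
    unfolding k_def l_def e_def using g0 by (intro div_gcd_coprime) auto
  moreover define m where "m = (x1 div k, x2 div k, x3 div k)"
  moreover have "x = scale3 k m"
    unfolding m_def scale3_def xy using kd by simp
  moreover have "y = scale3 l m"
  proof -
    have "k * (l * (xi div k)) = k * yi" if "g * yi = lam * xi" "k dvd xi" for xi yi
    proof -
      have "e * (k * yi) = e * (l * xi)"
        using that(1) ek el by (simp add: algebra_simps)
      then show ?thesis
        using that(2) e0 by (simp add: algebra_simps)
    qed
    then show ?thesis
      unfolding m_def scale3_def xy using k1 gy kd by simp
  qed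
  ultimately show ?thesis
    using that k1 by blast
qed

lemma inj_on_scale3_pairs:
  "inj_on (\<lambda>((k, l), m). (scale3 k m, scale3 l m))
     {((k, l), m). (0 :: int) < k \<and> coprime k l \<and> m \<noteq> (0, 0, 0)}"
proof (rule inj_onI)
  fix a b
  assume a: "a \<in> {((k, l), m). (0 :: int) < k \<and> coprime k l \<and> m \<noteq> (0, 0, 0)}"
    and b: "b \<in> {((k, l), m). (0 :: int) < k \<and> coprime k l \<and> m \<noteq> (0, 0, 0)}"
    and eq: "(\<lambda>((k, l), m). (scale3 k m, scale3 l m)) a = (\<lambda>((k, l), m). (scale3 k m, scale3 l m)) b"
  obtain k l m1 m2 m3 where a': "a = ((k, l), (m1, m2, m3))"
    by (metis prod.exhaust)
  obtain k' l' n1 n2 n3 where b': "b = ((k', l'), (n1, n2, n3))"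
    by (metis prod.exhaust)
  have k: "0 < k" "coprime k l" and k': "0 < k'" "coprime k' l'" and n: "(n1, n2, n3) \<noteq> (0, 0, 0)"
    using a b unfolding a' b' by auto
  have eqs: "k * m1 = k' * n1" "k * m2 = k' * n2" "k * m3 = k' * n3"
      "l * m1 = l' * n1" "l * m2 = l' * n2" "l * m3 = l' * n3"
    using eq unfolding a' b' by (auto simp: scale3_def)
  have "(k * l' - l * k') * ni = 0" if "k' * ni = k * mi" "l' * ni = l * mi" for ni mi
  proof -
    have "(k * l' - l * k') * ni = k * (l' * ni) - l * (k' * ni)"
      by (simp add: algebra_simps)
    also have "\<dots> = 0"
      using that by (simp add: algebra_simps)
    finally show ?thesis .
  qed
  then have kl: "k * l' = l * k'"
    using eqs n by (metis mult_eq_0_iff eq_iff_diff_eq_0)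
  then have "k dvd k'" "k' dvd k"
    using k k' by (metis coprime_dvd_mult_right_iff coprime_dvd_mult_left_iff dvd_triv_left dvd_triv_right)+
  then have "k = k'"
    using k k' by (simp add: zdvd_antisym_nonneg)
  then show "a = b"
    using eqs kl k unfolding a' b' by simp
qed

definition coprime_pairs :: "(nat \<times> nat) set" where
  "coprime_pairs = {(k, l). 1 \<le> k \<and> 1 \<le> l \<and> coprime k l}"

definition ray_params :: "int \<Rightarrow> (int \<times> int) set" where
  "ray_params n = {(k, l). k \<in> {1..2 * n} \<and> l \<in> {-2 * n..2 * n} \<and> l \<noteq> 0 \<and> coprime k l}"

definition ray_sum :: "int \<Rightarrow> int \<Rightarrow> int \<Rightarrow> int" where
  "ray_sum n k l = (\<Sum>m\<in>box3 n - {(0, 0, 0)}. fibre_weight n (scale3 k m) * fibre_weight n (scale3 l m))"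

lemma finite_ray_params: "finite (ray_params n)"
  by (rule finite_subset[of _ "{1..2 * n} \<times> {-2 * n..2 * n}"]) (auto simp: ray_params_def)

lemma abs_le_of_scale3_mem_box3:
  assumes "m \<noteq> (0, 0, 0)" "scale3 j m \<in> box3 n"
  shows "\<bar>j\<bar> \<le> 2 * n"
proof -
  obtain m1 m2 m3 where m: "m = (m1, m2, m3)"
    by (metis prod.exhaust)
  have "\<bar>j\<bar> \<le> \<bar>j * mi\<bar>" if "mi \<noteq> 0" for mi :: int
  proof -
    have "1 \<le> \<bar>mi\<bar>"
      using that by linarith
    then show ?thesis
      by (simp add: abs_mult mult_le_cancel_left1)
  qed
  moreover have "\<bar>j * m1\<bar> \<le> 2 * n" "\<bar>j * m2\<bar> \<le> 2 * n" "\<bar>j * m3\<bar> \<le> 2 * n"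
    using assms(2) unfolding m scale3_def box3_def by auto
  ultimately show ?thesis
    using assms(1) m by force
qed

lemma mem_box3_of_scale3:
  assumes "k \<ge> 1" "scale3 k m \<in> box3 n"
  shows "m \<in> box3 n"
proof -
  obtain m1 m2 m3 where m: "m = (m1, m2, m3)"
    by (metis prod.exhaust)
  have "\<bar>m1\<bar> \<le> \<bar>k * m1\<bar>" "\<bar>m2\<bar> \<le> \<bar>k * m2\<bar>" "\<bar>m3\<bar> \<le> \<bar>k * m3\<bar>"
    using assms(1) by (simp_all add: abs_mult mult_le_cancel_right1)
  then show ?thesis
    using assms(2) unfolding m scale3_def box3_def by (auto simp: abs_le_iff)
qed

definition nonzero_parallel_pairs :: "int \<Rightarrow> ((int \<times> int \<times> int) \<times> (int \<times> int \<times> int)) set" where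
  "nonzero_parallel_pairs n = {(x, y). x \<in> box3 n - {(0, 0, 0)} \<and> y \<in> box3 n - {(0, 0, 0)} \<and> parallel3 x y}"

lemma bij_betw_scale3_pairs:
  "bij_betw (\<lambda>((k, l), m). (scale3 k m, scale3 l m))
     {((k, l), m). (k, l) \<in> ray_params n \<and> m \<in> box3 n - {(0, 0, 0)} \<and> scale3 k m \<in> box3 n \<and> scale3 l m \<in> box3 n}
     (nonzero_parallel_pairs n)"
  (is "bij_betw ?f ?I ?P")
proof (rule bij_betw_imageI)
  show "inj_on ?f ?I"
    by (rule inj_on_subset[OF inj_on_scale3_pairs]) (auto simp: ray_params_def)
  show "?f ` ?I = ?P"
  proof (intro equalityI subsetI)
    fix xy
    assume "xy \<in> ?f ` ?I"
    then obtain i where i: "i \<in> ?I" "xy = ?f i"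
      by blast
    obtain k l m where "i = ((k, l), m)"
      by (metis prod.exhaust)
    with i have "xy = (scale3 k m, scale3 l m)" "((k, l), m) \<in> ?I"
      by simp_all
    moreover have "scale3 k m \<noteq> (0, 0, 0)" "scale3 l m \<noteq> (0, 0, 0)"
      using calculation(2) by (auto simp: ray_params_def scale3_eq_0_iff)
    ultimately show "xy \<in> ?P"
      by (simp add: nonzero_parallel_pairs_def parallel3_scale3)
  next
    fix xy
    assume "xy \<in> ?P"
    obtain x y where "xy = (x, y)"
      by (cases xy)
    with \<open>xy \<in> ?P\<close> have xy: "xy = (x, y)" "x \<in> box3 n" "y \<in> box3 n"
      "x \<noteq> (0, 0, 0)" "y \<noteq> (0, 0, 0)" "parallel3 x y"
      by (simp_all add: nonzero_parallel_pairs_def)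
    then obtain k l m where klm: "k \<ge> 1" "coprime k l" "x = scale3 k m" "y = scale3 l m"
      by (auto elim: parallel3_obtains_scale3)
    then have m: "m \<noteq> (0, 0, 0)" and "l \<noteq> 0"
      using xy by (auto simp: scale3_eq_0_iff)
    moreover have "\<bar>k\<bar> \<le> 2 * n" "\<bar>l\<bar> \<le> 2 * n"
      using abs_le_of_scale3_mem_box3[OF m, of k n] abs_le_of_scale3_mem_box3[OF m, of l n] xy klm by simp_all
    moreover have "m \<in> box3 n"
      using mem_box3_of_scale3[OF \<open>k \<ge> 1\<close>] xy klm by simp
    ultimately have "((k, l), m) \<in> ?I"
      using klm xy by (auto simp: ray_params_def)
    moreover have "xy = ?f ((k, l), m)"
      using klm xy by simp
    ultimately show "xy \<in> ?f ` ?I"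
      by blast
  qed
qed

lemma sum_nonzero_parallel_weights:
  "(\<Sum>(x, y)\<in>nonzero_parallel_pairs n. fibre_weight n x * fibre_weight n y)
     = (\<Sum>(k, l)\<in>ray_params n. ray_sum n k l)"
proof -
  let ?I = "{((k, l), m). (k, l) \<in> ray_params n \<and> m \<in> box3 n - {(0, 0, 0)} \<and> scale3 k m \<in> box3 n \<and> scale3 l m \<in> box3 n}"
  let ?G = "\<lambda>((k, l), m). fibre_weight n (scale3 k m) * fibre_weight n (scale3 l m)"
  have "(\<Sum>(x, y)\<in>nonzero_parallel_pairs n. fibre_weight n x * fibre_weight n y)
      = sum ?G ?I"
    by (subst sum.reindex_bij_betw[OF bij_betw_scale3_pairs, symmetric]) (simp add: case_prod_beta)
  also have "\<dots> = sum ?G (ray_params n \<times> (box3 n - {(0, 0, 0)}))"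
    by (intro sum.mono_neutral_left)
       (auto simp: finite_ray_params finite_box3 intro: fibre_weight_neq_0_imp_mem_box3)
  also have "\<dots> = (\<Sum>(k, l)\<in>ray_params n. ray_sum n k l)"
    by (simp add: sum.cartesian_product' ray_sum_def case_prod_beta)
  finally show ?thesis .
qed

lemma ray_sum_uminus_right: "ray_sum n k (- l) = ray_sum n k l"
proof -
  have "fibre_weight n (scale3 (- l) m) = fibre_weight n (scale3 l m)" for m
    by (cases m) (simp add: fibre_weight_def scale3_def tent_def abs_mult)
  then show ?thesis
    by (simp add: ray_sum_def)
qed

lemma sum_ray_params_eq:
  "(\<Sum>(k, l)\<in>ray_params (int N). ray_sum (int N) k l)
     = 2 * (\<Sum>(k, l)\<in>coprime_pairs \<inter> {(k, l). max k l \<le> 2 * N}. ray_sum (int N) (int k) (int l))"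
proof -
  define Q where "Q = coprime_pairs \<inter> {(k, l). max k l \<le> 2 * N}"
  define pos where "pos = (\<lambda>(k, l). (int k, int l))"
  define neg where "neg = (\<lambda>(k, l). (int k, - int l))"
  have "finite Q"
    unfolding Q_def by (rule finite_subset[of _ "{0..2 * N} \<times> {0..2 * N}"]) auto
  have "ray_params (int N) = pos ` Q \<union> neg ` Q"
  proof (intro equalityI subsetI)
    fix z
    assume "z \<in> ray_params (int N)"
    then obtain k l where z: "z = (k, l)" "1 \<le> k" "k \<le> 2 * int N" "\<bar>l\<bar> \<le> 2 * int N" "l \<noteq> 0" "coprime k l"
      by (auto simp: ray_params_def)
    then have "coprime (int (nat k)) (int (nat \<bar>l\<bar>))"
      by simp
    then have "coprime (nat k) (nat \<bar>l\<bar>)"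
      by (simp only: coprime_int_iff)
    then have "(nat k, nat \<bar>l\<bar>) \<in> Q"
      using z by (auto simp: Q_def coprime_pairs_def)
    moreover have "z = pos (nat k, nat \<bar>l\<bar>) \<or> z = neg (nat k, nat \<bar>l\<bar>)"
      using z by (auto simp: pos_def neg_def abs_if)
    ultimately show "z \<in> pos ` Q \<union> neg ` Q"
      by blast
  next
    fix z
    assume "z \<in> pos ` Q \<union> neg ` Q"
    then show "z \<in> ray_params (int N)"
      by (auto simp: Q_def coprime_pairs_def ray_params_def pos_def neg_def coprime_int_iff)
  qed
  moreover have "pos ` Q \<inter> neg ` Q = {}"
    by (auto simp: Q_def coprime_pairs_def pos_def neg_def)
  ultimately have "(\<Sum>(k, l)\<in>ray_params (int N). ray_sum (int N) k l)
      = (\<Sum>(k, l)\<in>pos ` Q. ray_sum (int N) k l) + (\<Sum>(k, l)\<in>neg ` Q. ray_sum (int N) k l)"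
    using \<open>finite Q\<close> by (simp add: sum.union_disjoint)
  also have "(\<Sum>(k, l)\<in>pos ` Q. ray_sum (int N) k l) = (\<Sum>(k, l)\<in>Q. ray_sum (int N) (int k) (int l))"
    by (subst sum.reindex) (auto simp: inj_on_def pos_def case_prod_beta)
  also have "(\<Sum>(k, l)\<in>neg ` Q. ray_sum (int N) k l) = (\<Sum>(k, l)\<in>Q. ray_sum (int N) (int k) (int l))"
    by (subst sum.reindex) (auto simp: inj_on_def neg_def case_prod_beta ray_sum_uminus_right)
  finally show ?thesis
    by (simp add: Q_def)
qed

lemma fibre_weight_0: "n \<ge> 0 \<Longrightarrow> fibre_weight n (0, 0, 0) = 2 * n + 1"
  by (simp add: fibre_weight_def tent_def)

text \<open>The zero vector is parallel to every vector and has weight M = 2 n + 1, and all weights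
  add up to M^4.\<close>
lemma sum_parallel_weights_split:
  assumes n: "n \<ge> 0"
  shows "(\<Sum>x\<in>box3 n. \<Sum>y\<in>box3 n. fibre_weight n x * fibre_weight n y * of_bool (parallel3 x y))
       = 2 * (2 * n + 1) ^ 5 - (2 * n + 1) ^ 2
         + (\<Sum>(x, y)\<in>nonzero_parallel_pairs n. fibre_weight n x * fibre_weight n y)"
proof -
  define M where "M = 2 * n + 1"
  let ?F = "\<lambda>x y. fibre_weight n x * fibre_weight n y * of_bool (parallel3 x y)"
  let ?B = "box3 n - {(0, 0, 0)}"
  have zero: "(0, 0, 0) \<in> box3 n"
    using n by (simp add: box3_def)
  have w0: "fibre_weight n (0, 0, 0) = M"
    using fibre_weight_0[OF n] by (simp add: M_def)
  have total: "(\<Sum>x\<in>box3 n. fibre_weight n x) = M ^ 4"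
    unfolding M_def by (rule sum_fibre_weight[OF n])
  have total': "(\<Sum>x\<in>?B. fibre_weight n x) = M ^ 4 - M"
    using sum.remove[OF finite_box3 zero, of "fibre_weight n"] total w0 by simp
  have row: "(\<Sum>y\<in>box3 n. ?F x y) = fibre_weight n x * M + (\<Sum>y\<in>?B. ?F x y)" for x
    using sum.remove[OF finite_box3 zero, of "?F x"] w0 parallel3_0(2)[of x] by simp
  have "(\<Sum>x\<in>box3 n. \<Sum>y\<in>box3 n. ?F x y) = (\<Sum>y\<in>box3 n. ?F (0, 0, 0) y) + (\<Sum>x\<in>?B. \<Sum>y\<in>box3 n. ?F x y)"
    by (rule sum.remove[OF finite_box3 zero])
  also have "(\<Sum>y\<in>box3 n. ?F (0, 0, 0) y) = M * M ^ 4"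
    by (simp add: w0 parallel3_0 total sum_distrib_left[symmetric])
  also have "(\<Sum>x\<in>?B. \<Sum>y\<in>box3 n. ?F x y) = (M ^ 4 - M) * M + (\<Sum>x\<in>?B. \<Sum>y\<in>?B. ?F x y)"
    by (simp add: row sum.distrib sum_distrib_right[symmetric] total')
  also have "(\<Sum>x\<in>?B. \<Sum>y\<in>?B. ?F x y) = (\<Sum>(x, y)\<in>nonzero_parallel_pairs n. fibre_weight n x * fibre_weight n y)"
  proof -
    have "nonzero_parallel_pairs n = (?B \<times> ?B) \<inter> {(x, y). parallel3 x y}"
      by (auto simp: nonzero_parallel_pairs_def)
    then show ?thesis
      by (simp add: sum.cartesian_product sum.inter_restrict finite_box3 case_prod_beta of_bool_def)
         (rule sum.cong; simp)
  qed
  finally show ?thesis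
    unfolding M_def[symmetric] by (simp add: algebra_simps power_numeral_reduce)
qed

lemma commuting_count_2_eq_ray_sums:
  "real (commuting_count TYPE(2) N) = 2 * (2 * real N + 1) ^ 5 - (2 * real N + 1) ^ 2
     + 2 * (\<Sum>(k, l)\<in>coprime_pairs \<inter> {(k, l). max k l \<le> 2 * N}. real_of_int (ray_sum (int N) (int k) (int l)))"
proof -
  have "int (commuting_count TYPE(2) N) = 2 * (2 * int N + 1) ^ 5 - (2 * int N + 1) ^ 2
      + 2 * (\<Sum>(k, l)\<in>coprime_pairs \<inter> {(k, l). max k l \<le> 2 * N}. ray_sum (int N) (int k) (int l))"
    unfolding commuting_count_2_eq_sum_weight sum_parallel_weights_split[OF of_nat_0_le_iff]
      sum_nonzero_parallel_weights sum_ray_params_eq ..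
  then have "real_of_int (int (commuting_count TYPE(2) N)) = real_of_int (2 * (2 * int N + 1) ^ 5 - (2 * int N + 1) ^ 2
      + 2 * (\<Sum>(k, l)\<in>coprime_pairs \<inter> {(k, l). max k l \<le> 2 * N}. ray_sum (int N) (int k) (int l)))"
    by (rule arg_cong)
  then show ?thesis
    by (simp add: of_int_sum case_prod_beta)
qed

section \<open>The density series\<close>

definition pair_density :: "nat \<Rightarrow> nat \<Rightarrow> real" where
  "pair_density k l = 1 / real (max k l) ^ 3 - real (min k l) / (3 * real (max k l) ^ 4)"

definition shell :: "nat \<Rightarrow> (nat \<times> nat) set" where
  "shell j = {(k, l). 1 \<le> k \<and> 1 \<le> l \<and> max k l = j}"

lemma finite_shell: "finite (shell j)"
  by (rule finite_subset[of _ "{0..j} \<times> {0..j}"]) (auto simp: shell_def)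

lemma sum_shell:
  assumes "1 \<le> j"
  shows "sum g (shell j) = (\<Sum>k\<in>{1..<j}. g (k, j)) + (\<Sum>k\<in>{1..<j}. g (j, k)) + g (j, j)"
proof -
  have "shell j = (\<lambda>k. (k, j)) ` {1..<j} \<union> ((\<lambda>k. (j, k)) ` {1..<j} \<union> {(j, j)})"
    using assms by (auto simp: shell_def max_def split: if_splits)
  also have "sum g \<dots> = sum g ((\<lambda>k. (k, j)) ` {1..<j}) + sum g ((\<lambda>k. (j, k)) ` {1..<j} \<union> {(j, j)})"
    by (rule sum.union_disjoint) auto
  also have "sum g ((\<lambda>k. (j, k)) ` {1..<j} \<union> {(j, j)}) = sum g ((\<lambda>k. (j, k)) ` {1..<j}) + g (j, j)"
    by (simp add: image_iff add.commute)
  finally show ?thesis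
    by (simp add: sum.reindex inj_on_def add.assoc)
qed

lemma card_shell: "1 \<le> j \<Longrightarrow> real (card (shell j)) = 2 * real j - 1"
  using sum_shell[of j "\<lambda>_. 1 :: real"] by (simp add: of_nat_diff)

lemma sum_over_shells:
  "sum g {(k, l). 1 \<le> k \<and> 1 \<le> l \<and> J < max k l \<and> max k l \<le> L} = (\<Sum>j\<in>{J<..L}. sum g (shell j))"
proof -
  let ?A = "{(k, l). 1 \<le> k \<and> 1 \<le> l \<and> J < max k l \<and> max k l \<le> L}"
  have "finite ?A"
    by (rule finite_subset[of _ "{0..L} \<times> {0..L}"]) auto
  then have "sum g ?A = (\<Sum>j\<in>{J<..L}. sum g {x \<in> ?A. (\<lambda>(k, l). max k l) x = j})"
    by (intro sum.group[symmetric]) auto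
  also have "\<dots> = (\<Sum>j\<in>{J<..L}. sum g (shell j))"
    by (intro sum.cong refl arg_cong[where f = "sum g"]) (auto simp: shell_def)
  finally show ?thesis .
qed

lemma pair_density_nonneg: "1 \<le> max k l \<Longrightarrow> 0 \<le> pair_density k l"
proof -
  assume "1 \<le> max k l"
  then have c: "real (max k l) \<ge> 1" by simp
  have "real (min k l) / (3 * real (max k l) ^ 4) \<le> real (max k l) / (3 * real (max k l) ^ 4)"
    by (simp add: divide_right_mono)
  also have "\<dots> = 1 / (3 * real (max k l) ^ 3)"
    using c by (simp add: power_eq_if)
  also have "\<dots> \<le> 1 / real (max k l) ^ 3"
    using c by (simp add: frac_le)
  finally show ?thesis unfolding pair_density_def by simp
qed

lemma pair_density_mult:
  assumes "1 \<le> e"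
  shows "pair_density (e * k) (e * l) = pair_density k l / real e ^ 3"
proof -
  have "max (e * k) (e * l) = e * max k l" "min (e * k) (e * l) = e * min k l"
    by (simp_all add: max_def min_def)
  then show ?thesis
    using assms unfolding pair_density_def by (simp add: field_simps power_numeral_reduce)
qed

lemma sum_shell_pair_density:
  assumes j: "1 \<le> j"
  shows "(\<Sum>(k, l)\<in>shell j. pair_density k l) = 5 / (3 * real j ^ 2) - 1 / real j ^ 3"
proof -
  have gauss: "(\<Sum>k\<in>{1..<j}. real k) = real j * (real j - 1) / 2"
  proof -
    have "{1..<j} = {Suc 0..j - 1}"
      using j by auto
    then show ?thesis
      using double_gauss_sum_from_Suc_0[of "j - 1", where 'a = real] j by (simp add: of_nat_diff mult_ac)
  qed
  have "(\<Sum>k\<in>{1..<j}. pair_density k j) = (\<Sum>k\<in>{1..<j}. 1 / real j ^ 3 - real k / (3 * real j ^ 4))"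
    by (rule sum.cong) (auto simp: pair_density_def max_def min_def)
  also have "\<dots> = real (j - 1) / real j ^ 3 - (\<Sum>k\<in>{1..<j}. real k) / (3 * real j ^ 4)"
    by (simp add: sum_subtractf sum_divide_distrib[symmetric])
  also have "\<dots> = (real j - 1) / real j ^ 3 - real j * (real j - 1) / 2 / (3 * real j ^ 4)"
    unfolding gauss using j by (simp add: of_nat_diff)
  also have "\<dots> = 5 * (real j - 1) / (6 * real j ^ 3)"
    using j by (simp add: field_simps power_numeral_reduce)
  finally have side: "(\<Sum>k\<in>{1..<j}. pair_density k j) = 5 * (real j - 1) / (6 * real j ^ 3)" .
  moreover have "(\<Sum>k\<in>{1..<j}. pair_density j k) = (\<Sum>k\<in>{1..<j}. pair_density k j)"
    by (simp add: pair_density_def max.commute min.commute)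
  moreover have "pair_density j j = 2 / (3 * real j ^ 3)"
    using j by (simp add: pair_density_def field_simps power_numeral_reduce)
  ultimately show ?thesis
    using sum_shell[OF j, of "\<lambda>(k, l). pair_density k l"] j by (simp add: field_simps power_numeral_reduce)
qed

lemma zeta_real_has_sum:
  assumes "s \<ge> 2"
  shows "((\<lambda>j::nat. 1 / real j ^ s) has_sum zeta_real (real s)) {1..}"
proof -
  have "summable (\<lambda>n. 1 / real (Suc n) ^ s)"
    using inverse_power_summable[OF assms, where 'a = real] summable_Suc_iff[of "\<lambda>n. inverse (real n ^ s)"]
    by (simp add: divide_inverse)
  then have "(\<lambda>n. 1 / real (Suc n) ^ s) sums zeta_real (real s)"
    unfolding zeta_real_def by (simp add: powr_realpow summable_sums)
  then have "((\<lambda>n. 1 / real (Suc n) ^ s) has_sum zeta_real (real s)) UNIV"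
    by (rule sums_nonneg_imp_has_sum) simp
  moreover have "bij_betw Suc UNIV {1::nat..}"
    by (rule bij_betwI[where g = "\<lambda>n. n - 1"]) auto
  ultimately show ?thesis
    using has_sum_reindex_bij_betw[of Suc UNIV "{1::nat..}" "\<lambda>j. 1 / real j ^ s"] by simp
qed

lemma zeta_real_pos:
  assumes "s \<ge> 2"
  shows "zeta_real (real s) > 0"
proof -
  have "((\<lambda>j::nat. 1 / real j ^ s) has_sum 1) {1}"
    using has_sum_finite[of "{1::nat}" "\<lambda>j. 1 / real j ^ s"] by simp
  then have "1 \<le> zeta_real (real s)"
    by (rule has_sum_mono_neutral[OF _ zeta_real_has_sum[OF assms]]) auto
  then show ?thesis by simp
qed

lemma pair_density_has_sum:
  "((\<lambda>(k, l). pair_density k l) has_sum (5/3 * zeta_real 2 - zeta_real 3)) ({1..} \<times> {1..})"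
proof -
  define G where "G = (\<lambda>(j::nat, q::nat \<times> nat). pair_density (fst q) (snd q))"
  have shells: "((\<lambda>j::nat. 5/3 * (1 / real j ^ 2) + (-1) * (1 / real j ^ 3))
      has_sum (5/3 * zeta_real 2 + (-1) * zeta_real 3)) {1..}"
    using zeta_real_has_sum[of 2] zeta_real_has_sum[of 3]
    by (intro has_sum_add has_sum_cmult_right) simp_all
  have inner: "((\<lambda>q. G (j, q)) has_sum (5/3 * (1 / real j ^ 2) + (-1) * (1 / real j ^ 3))) (shell j)"
    if "j \<in> {1..}" for j
    using has_sum_finite[OF finite_shell, of "\<lambda>q. G (j, q)" j] sum_shell_pair_density[of j] that
    by (simp add: G_def case_prod_beta)
  have "G summable_on Sigma {1..} shell"
    using shells
    by (intro summable_on_SigmaI[OF inner]) (auto simp: summable_on_def G_def shell_def pair_density_nonneg)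
  then have total: "(G has_sum infsum G (Sigma {1..} shell)) (Sigma {1..} shell)"
    by simp
  have "((\<lambda>j::nat. 5/3 * (1 / real j ^ 2) + (-1) * (1 / real j ^ 3)) has_sum infsum G (Sigma {1..} shell)) {1..}"
    by (rule has_sum_SigmaD[OF total inner])
  then have "infsum G (Sigma {1..} shell) = 5/3 * zeta_real 2 - zeta_real 3"
    using shells has_sum_unique by fastforce
  with total have "(G has_sum (5/3 * zeta_real 2 - zeta_real 3)) (Sigma {1..} shell)"
    by simp
  moreover have "bij_betw snd (Sigma {1..} shell) ({1..} \<times> {1..})"
    by (rule bij_betwI[where g = "\<lambda>q. (max (fst q) (snd q), q)"]) (auto simp: shell_def)
  moreover have "G = (\<lambda>x. (\<lambda>(k, l). pair_density k l) (snd x))"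
    by (auto simp: G_def case_prod_beta)
  ultimately show ?thesis
    using has_sum_reindex_bij_betw[of snd _ _ "\<lambda>(k, l). pair_density k l"] by auto
qed

lemma bij_betw_gcd_decomposition:
  "bij_betw (\<lambda>(e, (k, l)). (e * k, e * l)) ({1..} \<times> coprime_pairs) ({1..} \<times> {1..})"
proof (rule bij_betwI[where g = "\<lambda>(k, l). (gcd k l, (k div gcd k l, l div gcd k l))"])
  show "(\<lambda>(e, (k, l)). (e * k, e * l)) \<in> {1..} \<times> coprime_pairs \<rightarrow> {1..} \<times> {1..}"
    by (auto simp: coprime_pairs_def)
  show "(\<lambda>(k, l). (gcd k l, (k div gcd k l, l div gcd k l))) \<in> {1..} \<times> {1..} \<rightarrow> {1..} \<times> coprime_pairs"
  proof (rule Pi_I)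
    fix b :: "nat \<times> nat"
    assume "b \<in> {1..} \<times> {1..}"
    then obtain k l where b: "b = (k, l)" "1 \<le> k" "1 \<le> l"
      by auto
    then have "gcd k l \<ge> 1" "k div gcd k l \<ge> 1" "l div gcd k l \<ge> 1"
      by (auto simp: div_greater_zero_iff Suc_le_eq)
    moreover have "coprime (k div gcd k l) (l div gcd k l)"
      by (rule div_gcd_coprime) (use b in auto)
    ultimately show "(\<lambda>(k, l). (gcd k l, (k div gcd k l, l div gcd k l))) b \<in> {1..} \<times> coprime_pairs"
      using b by (simp add: coprime_pairs_def)
  qed
  fix a :: "nat \<times> nat \<times> nat"
  assume "a \<in> {1..} \<times> coprime_pairs"
  then show "(\<lambda>(k, l). (gcd k l, (k div gcd k l, l div gcd k l))) ((\<lambda>(e, (k, l)). (e * k, e * l)) a) = a"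
    by (auto simp: coprime_pairs_def gcd_mult_distrib_nat[symmetric])
next
  fix b :: "nat \<times> nat"
  show "(\<lambda>(e, (k, l)). (e * k, e * l)) ((\<lambda>(k, l). (gcd k l, (k div gcd k l, l div gcd k l))) b) = b"
    by (auto split: prod.splits)
qed

lemma has_sum_positive_pairs_from_coprime:
  fixes f :: "nat \<times> nat \<Rightarrow> real"
  assumes s: "s \<ge> 2"
    and homogeneous: "\<And>e k l. 1 \<le> e \<Longrightarrow> f (e * k, e * l) = f (k, l) / real e ^ s"
    and nonneg: "\<And>q. q \<in> coprime_pairs \<Longrightarrow> 0 \<le> f q"
    and coprime_sum: "(f has_sum S) coprime_pairs"
  shows "(f has_sum (zeta_real (real s) * S)) ({1..} \<times> {1..})"
proof -
  define F where "F = (\<lambda>(e::nat, q::nat \<times> nat). f q / real e ^ s)"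
  have inner: "((\<lambda>q. F (e, q)) has_sum (S / real e ^ s)) coprime_pairs" for e
    using has_sum_cmult_right[OF coprime_sum, of "1 / real e ^ s"] by (simp add: F_def)
  have outer: "((\<lambda>e::nat. S / real e ^ s) has_sum (zeta_real (real s) * S)) {1..}"
    using has_sum_cmult_right[OF zeta_real_has_sum[OF s], of S] by (simp add: mult.commute)
  have "F summable_on {1..} \<times> coprime_pairs"
    using outer by (intro summable_on_SigmaI[OF inner]) (auto simp: summable_on_def F_def nonneg)
  then have total: "(F has_sum infsum F ({1..} \<times> coprime_pairs)) ({1..} \<times> coprime_pairs)"
    by simp
  have "((\<lambda>e::nat. S / real e ^ s) has_sum infsum F ({1..} \<times> coprime_pairs)) {1..}"
    by (rule has_sum_SigmaD[OF total inner])
  then have "infsum F ({1..} \<times> coprime_pairs) = zeta_real (real s) * S"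
    using outer has_sum_unique by blast
  with total have "(F has_sum (zeta_real (real s) * S)) ({1..} \<times> coprime_pairs)"
    by simp
  moreover have "(F has_sum (zeta_real (real s) * S)) ({1..} \<times> coprime_pairs)
      \<longleftrightarrow> ((\<lambda>a. f ((\<lambda>(e, (k, l)). (e * k, e * l)) a)) has_sum (zeta_real (real s) * S)) ({1..} \<times> coprime_pairs)"
    by (rule has_sum_cong) (auto simp: F_def homogeneous)
  ultimately have
    "((\<lambda>a. f ((\<lambda>(e, (k, l)). (e * k, e * l)) a)) has_sum (zeta_real (real s) * S)) ({1..} \<times> coprime_pairs)"
    by simp
  then show ?thesis
    using has_sum_reindex_bij_betw[OF bij_betw_gcd_decomposition] by blast
qed

definition coprime_density :: real where
  "coprime_density = infsum (\<lambda>(k, l). pair_density k l) coprime_pairs"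

lemma pair_density_summable_on_coprime_pairs: "(\<lambda>(k, l). pair_density k l) summable_on coprime_pairs"
  using pair_density_has_sum
  by (rule summable_on_subset_banach[OF has_sum_imp_summable]) (auto simp: coprime_pairs_def)

lemma zeta_ratio_eq_coprime_density:
  "10 * zeta_real 2 / (3 * zeta_real 3) = 2 * (1 + coprime_density)"
proof -
  have "((\<lambda>(k, l). pair_density k l) has_sum coprime_density) coprime_pairs"
    using pair_density_summable_on_coprime_pairs by (simp add: coprime_density_def)
  then have "((\<lambda>(k, l). pair_density k l) has_sum (zeta_real (real 3) * coprime_density)) ({1..} \<times> {1..})"
    by (rule has_sum_positive_pairs_from_coprime[rotated 3])
       (auto simp: pair_density_mult coprime_pairs_def pair_density_nonneg)
  then have "zeta_real 3 * coprime_density = 5/3 * zeta_real 2 - zeta_real 3"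
    using pair_density_has_sum has_sum_unique by force
  then show ?thesis
    using zeta_real_pos[of 3] by (simp add: field_simps)
qed

lemma sum_inverse_square_tail:
  assumes "1 \<le> J"
  shows "J \<le> L \<Longrightarrow> (\<Sum>j\<in>{J<..L}. 1 / real j ^ 2) \<le> 1 / real J - 1 / real L"
proof (induction L)
  case (Suc L)
  show ?case
  proof (cases "J = Suc L")
    case False
    then have JL: "J \<le> L"
      using Suc.prems by simp
    have L: "real L \<ge> 1"
      using JL assms by simp
    have "1 / real (Suc L) ^ 2 \<le> 1 / (real L * real (Suc L))"
      using L by (intro divide_left_mono) (auto simp: power2_eq_square)
    also have "\<dots> = 1 / real L - 1 / real (Suc L)"
      using L by (simp add: field_simps)
    finally have "1 / real (Suc L) ^ 2 \<le> 1 / real L - 1 / real (Suc L)" .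
    moreover have "{J<..Suc L} = insert (Suc L) {J<..L}"
      using JL by auto
    ultimately show ?thesis
      using Suc.IH[OF JL] by simp
  qed simp
qed simp

lemma sum_pair_density_tail_le:
  assumes J: "1 \<le> J" and F: "finite F" "F \<subseteq> {(k, l). 1 \<le> k \<and> 1 \<le> l \<and> J < max k l}"
  shows "(\<Sum>(k, l)\<in>F. pair_density k l) \<le> 5 / (3 * real J)"
proof -
  define L where "L = Max (insert J ((\<lambda>(k, l). max k l) ` F))"
  have JL: "J \<le> L"
    unfolding L_def using F by simp
  let ?A = "{(k, l). 1 \<le> k \<and> 1 \<le> l \<and> J < max k l \<and> max k l \<le> L}"
  have "F \<subseteq> ?A"
  proof
    fix x
    assume x: "x \<in> F"
    have "(\<lambda>(k, l). max k l) x \<le> L"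
      unfolding L_def using F x by (intro Max_ge) auto
    then show "x \<in> ?A"
      using F(2) x by (cases x) auto
  qed
  moreover have "finite ?A"
    by (rule finite_subset[of _ "{0..L} \<times> {0..L}"]) auto
  ultimately have "(\<Sum>(k, l)\<in>F. pair_density k l) \<le> (\<Sum>(k, l)\<in>?A. pair_density k l)"
    by (intro sum_mono2) (auto intro: pair_density_nonneg)
  also have "\<dots> = (\<Sum>j\<in>{J<..L}. 5 / (3 * real j ^ 2) - 1 / real j ^ 3)"
    unfolding sum_over_shells using J by (intro sum.cong refl sum_shell_pair_density) auto
  also have "\<dots> \<le> (\<Sum>j\<in>{J<..L}. 5/3 * (1 / real j ^ 2))"
    by (intro sum_mono) simp
  also have "\<dots> = 5/3 * (\<Sum>j\<in>{J<..L}. 1 / real j ^ 2)"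
    by (simp only: sum_distrib_left)
  also have "\<dots> \<le> 5/3 * (1 / real J - 1 / real L)"
    using sum_inverse_square_tail[OF J JL] by (intro mult_left_mono) auto
  also have "\<dots> \<le> 5 / (3 * real J)"
    using JL J by simp
  finally show ?thesis .
qed

lemma coprime_density_truncation:
  assumes J: "1 \<le> J"
  defines "A \<equiv> coprime_pairs \<inter> {(k, l). max k l \<le> J}"
  shows "0 \<le> coprime_density - (\<Sum>(k, l)\<in>A. pair_density k l)"
    and "coprime_density - (\<Sum>(k, l)\<in>A. pair_density k l) \<le> 5 / (3 * real J)"
proof -
  define B where "B = coprime_pairs - {(k, l). max k l \<le> J}"
  have finA: "finite A"
    unfolding A_def by (rule finite_subset[of _ "{0..J} \<times> {0..J}"]) auto
  have sB: "(\<lambda>(k, l). pair_density k l) summable_on B"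
    by (rule summable_on_subset_banach[OF pair_density_summable_on_coprime_pairs]) (auto simp: B_def)
  have "coprime_density = infsum (\<lambda>(k, l). pair_density k l) (A \<union> B)"
    unfolding coprime_density_def A_def B_def by (rule arg_cong[where f = "infsum _"]) auto
  also have "\<dots> = (\<Sum>(k, l)\<in>A. pair_density k l) + infsum (\<lambda>(k, l). pair_density k l) B"
    using finA sB by (subst infsum_Un_disjoint) (auto simp: A_def B_def)
  finally have tail: "coprime_density - (\<Sum>(k, l)\<in>A. pair_density k l) = infsum (\<lambda>(k, l). pair_density k l) B"
    by simp
  have "0 \<le> infsum (\<lambda>(k, l). pair_density k l) B"
    by (rule infsum_nonneg) (auto simp: B_def coprime_pairs_def intro: pair_density_nonneg)
  then show "0 \<le> coprime_density - (\<Sum>(k, l)\<in>A. pair_density k l)"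
    using tail by simp
  have "infsum (\<lambda>(k, l). pair_density k l) B \<le> 5 / (3 * real J)"
    by (rule infsum_le_finite_sums[OF sB])
       (auto intro!: sum_pair_density_tail_le[OF J] simp: B_def coprime_pairs_def)
  then show "coprime_density - (\<Sum>(k, l)\<in>A. pair_density k l) \<le> 5 / (3 * real J)"
    using tail by simp
qed

lemma sum_inverse_square_max_le_harm:
  "(\<Sum>(k, l)\<in>{1..L} \<times> {1..L}. 1 / real (max k l) ^ 2) \<le> 2 * harm L"
proof -
  have "{1..L} \<times> {1..L} = {(k, l). 1 \<le> k \<and> 1 \<le> l \<and> 0 < max k l \<and> max k l \<le> L}"
    by auto
  then have "(\<Sum>(k, l)\<in>{1..L} \<times> {1..L}. 1 / real (max k l) ^ 2)
      = (\<Sum>j\<in>{0<..L}. \<Sum>(k, l)\<in>shell j. 1 / real (max k l) ^ 2)"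
    by (simp only: sum_over_shells)
  also have "\<dots> = (\<Sum>j\<in>{0<..L}. (2 * real j - 1) / real j ^ 2)"
  proof (intro sum.cong refl)
    fix j :: nat
    assume j: "j \<in> {0<..L}"
    have "(\<Sum>(k, l)\<in>shell j. 1 / real (max k l) ^ 2) = (\<Sum>(k, l)\<in>shell j. 1 / real j ^ 2)"
      by (rule sum.cong) (auto simp: shell_def)
    then show "(\<Sum>(k, l)\<in>shell j. 1 / real (max k l) ^ 2) = (2 * real j - 1) / real j ^ 2"
      using card_shell[of j] j by simp
  qed
  also have "\<dots> \<le> (\<Sum>j\<in>{0<..L}. 2 * inverse (real j))"
    by (intro sum_mono) (auto simp: field_simps power2_eq_square)
  also have "\<dots> = 2 * harm L"
    by (simp add: harm_def sum_distrib_left atLeastSucAtMost_greaterThanAtMost[symmetric])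
  finally show ?thesis .
qed

lemma harm_le_one_plus_ln: "1 \<le> n \<Longrightarrow> harm n \<le> 1 + ln (real n)"
  using euler_mascheroni_sequence_decreasing[of 1 n] by (simp add: harm_def)

section \<open>Estimating the ray sums\<close>

lemma le_div_iff_mult_le_int:
  fixes b m x :: int
  assumes "b > 0"
  shows "x \<le> m div b \<longleftrightarrow> b * x \<le> m"
proof -
  have "x \<le> m div b \<longleftrightarrow> real_of_int x \<le> real_of_int m / real_of_int b"
    using le_floor_iff[of x "real_of_int m / real_of_int b"] floor_divide_of_int_eq[of m b, where 'a = real]
    by simp
  also have "\<dots> \<longleftrightarrow> b * x \<le> m"
    using assms by (simp add: pos_le_divide_eq mult.commute flip: of_int_mult)
  finally show ?thesis .
qed

definition tent_corr :: "int \<Rightarrow> int \<Rightarrow> int \<Rightarrow> int" where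
  "tent_corr n a b = (\<Sum>x\<in>{-2 * n..2 * n}. tent n (a * x) * tent n (b * x))"

lemma tent_corr_commute: "tent_corr n a b = tent_corr n b a"
  unfolding tent_corr_def by (simp add: mult.commute)

lemma sum_linear_product_closed_form:
  fixes M a b q :: int
  assumes "q \<ge> 0"
  shows "6 * (\<Sum>x\<in>{1..q}. (M - a * x) * (M - b * x))
     = 6 * q * M ^ 2 - 3 * (a + b) * M * q * (q + 1) + a * b * q * (q + 1) * (2 * q + 1)"
  using assms
proof (induction q rule: int_ge_induct)
  case (step q)
  have "{1..q + 1} = insert (q + 1) {1..q}"
    using step by auto
  then show ?case
    using step.IH by (simp add: algebra_simps power2_eq_square)
qed simp

lemma tent_corr_split:
  assumes n: "n \<ge> 0"
  shows "tent_corr n a b = (2 * n + 1) ^ 2 + 2 * (\<Sum>x\<in>{1..2 * n}. tent n (a * x) * tent n (b * x))"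
proof -
  let ?g = "\<lambda>x. tent n (a * x) * tent n (b * x)"
  have "{-2 * n..2 * n} = {-2 * n..-1} \<union> insert 0 {1..2 * n}"
    using n by auto
  then have "tent_corr n a b = sum ?g {-2 * n..-1} + sum ?g (insert 0 {1..2 * n})"
    unfolding tent_corr_def by (simp only:) (rule sum.union_disjoint; auto)
  also have "sum ?g (insert 0 {1..2 * n}) = ?g 0 + sum ?g {1..2 * n}"
    by simp
  finally have "tent_corr n a b = sum ?g {-2 * n..-1} + (?g 0 + sum ?g {1..2 * n})" .
  moreover have "sum ?g {-2 * n..-1} = sum ?g {1..2 * n}"
    by (rule sum.reindex_bij_witness[of _ uminus uminus]) (auto simp: tent_def abs_mult)
  moreover have "?g 0 = (2 * n + 1) ^ 2"
    using n by (simp add: tent_def power2_eq_square)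
  ultimately show ?thesis
    by simp
qed

lemma tent_corr_eq:
  assumes n: "n \<ge> 0" and a: "1 \<le> a" and ab: "a \<le> b"
  shows "tent_corr n a b = (2 * n + 1) ^ 2 + 2 * (\<Sum>x\<in>{1..2 * n div b}. (2 * n + 1 - a * x) * (2 * n + 1 - b * x))"
proof -
  let ?q = "2 * n div b"
  have b: "b > 0"
    using a ab by simp
  have q0: "?q \<ge> 0"
    using n b by (simp add: pos_imp_zdiv_nonneg_iff)
  have "?q \<le> b * ?q" "b * ?q \<le> 2 * n"
    using q0 a ab le_div_iff_mult_le_int[OF b, of ?q "2 * n"] by (simp_all add: mult_le_cancel_right1)
  then have q: "?q \<ge> 0" "?q \<le> 2 * n"
    using q0 by simp_all
  have "{1..2 * n} = {1..?q} \<union> {?q + 1..2 * n}"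
    using q by auto
  then have "(\<Sum>x\<in>{1..2 * n}. tent n (a * x) * tent n (b * x))
      = (\<Sum>x\<in>{1..?q}. tent n (a * x) * tent n (b * x)) + (\<Sum>x\<in>{?q + 1..2 * n}. tent n (a * x) * tent n (b * x))"
    by (simp add: sum.union_disjoint)
  also have "(\<Sum>x\<in>{?q + 1..2 * n}. tent n (a * x) * tent n (b * x)) = 0"
  proof (intro sum.neutral ballI)
    fix x
    assume x: "x \<in> {?q + 1..2 * n}"
    then have "2 * n < b * x"
      using le_div_iff_mult_le_int[OF b, of x "2 * n"] by simp
    then have "tent n (b * x) = 0"
      using b x q by (simp add: tent_def abs_mult)
    then show "tent n (a * x) * tent n (b * x) = 0"
      by simp
  qed
  also have "(\<Sum>x\<in>{1..?q}. tent n (a * x) * tent n (b * x))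
      = (\<Sum>x\<in>{1..?q}. (2 * n + 1 - a * x) * (2 * n + 1 - b * x))"
  proof (rule sum.cong[OF refl])
    fix x
    assume x: "x \<in> {1..?q}"
    then have "b * x \<le> 2 * n"
      using le_div_iff_mult_le_int[OF b, of x "2 * n"] by simp
    moreover have "0 \<le> a * x" "a * x \<le> b * x"
      using a ab x by (simp_all add: mult_right_mono)
    ultimately show "tent n (a * x) * tent n (b * x) = (2 * n + 1 - a * x) * (2 * n + 1 - b * x)"
      by (simp add: tent_def)
  qed
  finally show ?thesis
    using tent_corr_split[OF n, of a b] by simp
qed

lemma cubic_remainder_bound:
  fixes a b M e :: real
  assumes a1: "1 \<le> a" and ab: "a \<le> b" and e1: "1 \<le> e" and eb: "e \<le> b" and bM: "b \<le> M"
  shows "\<bar>M * (3 * (a - b) * e * (e - b) + a * b ^ 2) - a * e * (e - b) * (2 * e - b)\<bar> \<le> 5 * b ^ 2 * M ^ 2"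
proof -
  have b0: "0 \<le> b" and M0: "0 \<le> M"
    using a1 ab bM by simp_all
  have ebe: "0 \<le> e * (b - e)" "e * (b - e) \<le> b * b"
    using e1 eb b0 by (auto intro: mult_mono)
  have "0 \<le> (b - a) * (e * (b - e))" "(b - a) * (e * (b - e)) \<le> b * (b * b)"
    using ab a1 ebe b0 by (auto intro: mult_mono mult_nonneg_nonneg)
  moreover have "(a - b) * e * (e - b) = (b - a) * (e * (b - e))"
    by (simp add: algebra_simps)
  moreover have "0 \<le> a * b ^ 2" "a * b ^ 2 \<le> b * b ^ 2"
    using a1 ab b0 by (auto intro: mult_right_mono)
  ultimately have P: "0 \<le> 3 * (a - b) * e * (e - b) + a * b ^ 2" "3 * (a - b) * e * (e - b) + a * b ^ 2 \<le> 4 * b ^ 3"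
    by (simp_all add: power2_eq_square power3_eq_cube algebra_simps)
  have "\<bar>M * (3 * (a - b) * e * (e - b) + a * b ^ 2)\<bar> \<le> M * (4 * b ^ 3)"
    using M0 P by (simp add: abs_mult mult_left_mono)
  also have "\<dots> \<le> 4 * b ^ 2 * M ^ 2"
    using bM M0 b0
    by (simp add: power2_eq_square power3_eq_cube mult_left_mono mult_right_mono mult.assoc mult.left_commute)
  finally have first: "\<bar>M * (3 * (a - b) * e * (e - b) + a * b ^ 2)\<bar> \<le> 4 * b ^ 2 * M ^ 2" .
  have "\<bar>a * e * (e - b) * (2 * e - b)\<bar> = \<bar>a\<bar> * \<bar>e\<bar> * \<bar>e - b\<bar> * \<bar>2 * e - b\<bar>"
    by (simp add: abs_mult)
  also have "\<dots> \<le> b * b * b * b"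
    using a1 ab e1 eb b0 by (intro mult_mono) (auto simp: abs_le_iff)
  also have "\<dots> \<le> b * b * M * M"
    using bM b0 M0 by (intro mult_mono) auto
  finally have "\<bar>a * e * (e - b) * (2 * e - b)\<bar> \<le> b ^ 2 * M ^ 2"
    by (simp add: power2_eq_square)
  with first show ?thesis
    by (simp add: abs_le_iff)
qed

lemma tent_corr_remainder_eq:
  fixes n a b :: int
  assumes n: "n \<ge> 0" and a: "1 \<le> a" and ab: "a \<le> b"
  defines "M \<equiv> 2 * n + 1" and "e \<equiv> 2 * n mod b + 1"
  shows "3 * b ^ 2 * tent_corr n a b - 3 * b * M ^ 3 + a * M ^ 3
    = M * (3 * (a - b) * e * (e - b) + a * b ^ 2) - a * e * (e - b) * (2 * e - b)"
proof -
  define q where "q = 2 * n div b"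
  define S where "S = (\<Sum>x\<in>{1..q}. (M - a * x) * (M - b * x))"
  have "q \<ge> 0"
    unfolding q_def using n a ab by (simp add: pos_imp_zdiv_nonneg_iff)
  then have "6 * S = 6 * q * M ^ 2 - 3 * (a + b) * M * q * (q + 1) + a * b * q * (q + 1) * (2 * q + 1)"
    unfolding S_def by (rule sum_linear_product_closed_form)
  moreover have "tent_corr n a b = M ^ 2 + 2 * S"
    unfolding M_def S_def q_def using tent_corr_eq[OF n a ab] by simp
  moreover have "M = b * q + e"
    unfolding M_def e_def q_def using div_mult_mod_eq[of "2 * n" b] by (simp add: algebra_simps)
  text \<open>Eliminating q = (M - e) / b from the closed form leaves a remainder of order b^2 M^2.\<close>
  ultimately show ?thesis
    by algebra
qed

lemma tent_corr_estimate:
  fixes n a b :: int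
  assumes n: "n \<ge> 0" and a: "1 \<le> a" and ab: "a \<le> b" and b2: "b \<le> 2 * n"
  shows "\<bar>real_of_int (tent_corr n a b)
      - (2 * real_of_int n + 1) ^ 3 * (1 / real_of_int b - real_of_int a / (3 * real_of_int b ^ 2))\<bar>
    \<le> 2 * (2 * real_of_int n + 1) ^ 2"
proof -
  define M where "M = 2 * n + 1"
  define e where "e = 2 * n mod b + 1"
  have b1: "b \<ge> 1"
    using a ab by simp
  have "0 \<le> 2 * n mod b" "2 * n mod b < b"
    using b1 by simp_all
  then have e1: "1 \<le> e" "e \<le> b"
    unfolding e_def by simp_all
  define A B E R where "A = real_of_int a" and "B = real_of_int b" and "E = real_of_int e" and "R = real_of_int M"
  have id: "3 * B ^ 2 * real_of_int (tent_corr n a b) - 3 * B * R ^ 3 + A * R ^ 3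
      = R * (3 * (A - B) * E * (E - B) + A * B ^ 2) - A * E * (E - B) * (2 * E - B)"
    using arg_cong[OF tent_corr_remainder_eq[OF n a ab, folded M_def e_def], of real_of_int]
    unfolding A_def B_def E_def R_def by simp
  have bound: "\<bar>R * (3 * (A - B) * E * (E - B) + A * B ^ 2) - A * E * (E - B) * (2 * E - B)\<bar> \<le> 5 * B ^ 2 * R ^ 2"
    by (rule cubic_remainder_bound) (use a ab e1 b2 in \<open>simp_all add: A_def B_def E_def R_def M_def\<close>)
  have bp: "B > 0"
    using b1 by (simp add: B_def)
  have "real_of_int (tent_corr n a b) - R ^ 3 * (1 / B - A / (3 * B ^ 2))
      = (3 * B ^ 2 * real_of_int (tent_corr n a b) - 3 * B * R ^ 3 + A * R ^ 3) / (3 * B ^ 2)"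
    using bp by (simp add: field_simps power2_eq_square)
  also have "\<bar>\<dots>\<bar> \<le> 5 * B ^ 2 * R ^ 2 / (3 * B ^ 2)"
  proof -
    have "\<bar>3 * B ^ 2\<bar> = 3 * B ^ 2"
      by simp
    then show ?thesis
      unfolding id abs_divide by (simp only:) (rule divide_right_mono[OF bound], simp)
  qed
  also have "\<dots> \<le> 2 * R ^ 2"
    using bp by (simp add: field_simps)
  finally show ?thesis
    unfolding A_def B_def R_def M_def by simp
qed

lemma sum_of_bool_scaled_le:
  fixes n k l :: int
  assumes n: "n \<ge> 0" and k: "k \<ge> 1" and l: "l \<ge> 1"
  shows "(\<Sum>y\<in>{-n..n}. of_bool (\<bar>k * y\<bar> \<le> n) * of_bool (\<bar>l * y\<bar> \<le> n) :: int) = 2 * (n div max k l) + 1"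
proof -
  define c where "c = max k l"
  have c: "c > 0"
    using k unfolding c_def by simp
  have "(\<bar>k * y\<bar> \<le> n \<and> \<bar>l * y\<bar> \<le> n) \<longleftrightarrow> \<bar>y\<bar> \<le> n div c" for y
  proof -
    have "\<bar>k * y\<bar> \<le> \<bar>c * y\<bar>" "\<bar>l * y\<bar> \<le> \<bar>c * y\<bar>" "\<bar>c * y\<bar> = \<bar>k * y\<bar> \<or> \<bar>c * y\<bar> = \<bar>l * y\<bar>"
      using k l unfolding c_def abs_mult by (auto intro!: mult_right_mono simp: max_def)
    then have "(\<bar>k * y\<bar> \<le> n \<and> \<bar>l * y\<bar> \<le> n) \<longleftrightarrow> c * \<bar>y\<bar> \<le> n"
      using c by (auto simp: abs_mult)
    also have "\<dots> \<longleftrightarrow> \<bar>y\<bar> \<le> n div c"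
      using le_div_iff_mult_le_int[OF c] by simp
    finally show ?thesis .
  qed
  then have "(\<Sum>y\<in>{-n..n}. of_bool (\<bar>k * y\<bar> \<le> n) * of_bool (\<bar>l * y\<bar> \<le> n) :: int)
      = (\<Sum>y\<in>{-n..n}. of_bool (\<bar>y\<bar> \<le> n div c))"
    by (intro sum.cong refl) (simp flip: of_bool_conj)
  also have "\<dots> = int (card {-(n div c)..n div c})"
  proof -
    have "n div c \<le> n"
      using zdiv_mono2[of n 1 c] n c by simp
    then have "{-n..n} \<inter> {y. \<bar>y\<bar> \<le> n div c} = {-(n div c)..n div c}"
      by auto
    then show ?thesis
      by simp
  qed
  also have "\<dots> = 2 * (n div c) + 1"
    using n c by (simp add: pos_imp_zdiv_nonneg_iff)
  finally show ?thesis
    unfolding c_def .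
qed

lemma ray_sum_eq:
  fixes n k l :: int
  assumes n: "n \<ge> 0" and k: "k \<ge> 1" and l: "l \<ge> 1"
  shows "ray_sum n k l = tent_corr n k l * (2 * (n div max k l) + 1) ^ 2 - (2 * n + 1) ^ 2"
proof -
  let ?g = "\<lambda>m. fibre_weight n (scale3 k m) * fibre_weight n (scale3 l m)"
  let ?F = "\<lambda>x. tent n (k * x) * tent n (l * x)"
  let ?G = "\<lambda>y. of_bool (\<bar>k * y\<bar> \<le> n) * of_bool (\<bar>l * y\<bar> \<le> n) :: int"
  have "(0, 0, 0) \<in> box3 n"
    using n by (simp add: box3_def)
  then have "ray_sum n k l = sum ?g (box3 n) - ?g (0, 0, 0)"
    unfolding ray_sum_def by (simp add: sum_diff1 finite_box3)
  also have "?g (0, 0, 0) = (2 * n + 1) ^ 2"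
    using n by (simp add: fibre_weight_0 scale3_def power2_eq_square)
  also have "sum ?g (box3 n) = (\<Sum>x\<in>{-2 * n..2 * n}. \<Sum>y\<in>{-n..n}. \<Sum>z\<in>{-n..n}. ?F x * (?G y * ?G z))"
    unfolding box3_def
    by (simp add: sum.cartesian_product fibre_weight_def scale3_def case_prod_beta algebra_simps)
  also have "\<dots> = (\<Sum>x\<in>{-2 * n..2 * n}. ?F x * (\<Sum>y\<in>{-n..n}. \<Sum>z\<in>{-n..n}. ?G y * ?G z))"
    by (simp only: sum_distrib_left)
  also have "(\<Sum>y\<in>{-n..n}. \<Sum>z\<in>{-n..n}. ?G y * ?G z) = sum ?G {-n..n} * sum ?G {-n..n}"
    by (rule sum_product[symmetric])
  also have "(\<Sum>x\<in>{-2 * n..2 * n}. ?F x * (sum ?G {-n..n} * sum ?G {-n..n}))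
      = tent_corr n k l * (sum ?G {-n..n} * sum ?G {-n..n})"
    unfolding tent_corr_def by (rule sum_distrib_right[symmetric])
  also have "sum ?G {-n..n} = 2 * (n div max k l) + 1"
    by (rule sum_of_bool_scaled_le[OF n k l])
  finally show ?thesis
    by (simp add: power2_eq_square)
qed

lemma square_near_double:
  fixes V y :: real
  assumes V: "\<bar>V - 2 * y\<bar> \<le> 1" and y: "y \<ge> 1 / 2" and V0: "V \<ge> 0"
  shows "V ^ 2 \<le> 16 * y ^ 2" and "\<bar>V ^ 2 - 4 * y ^ 2\<bar> \<le> 6 * y"
proof -
  have V4: "V \<le> 4 * y"
    using V y by (simp add: abs_le_iff)
  then show "V ^ 2 \<le> 16 * y ^ 2"
    using power_mono[OF V4 V0, of 2] by (simp add: power2_eq_square)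
  have "V ^ 2 - 4 * y ^ 2 = (V - 2 * y) * (V + 2 * y)"
    by (simp add: power2_eq_square algebra_simps)
  then have "\<bar>V ^ 2 - 4 * y ^ 2\<bar> = \<bar>V - 2 * y\<bar> * (V + 2 * y)"
    using V0 y by (simp add: abs_mult)
  also have "\<dots> \<le> 1 * (6 * y)"
    using V V4 V0 y by (intro mult_mono) auto
  finally show "\<bar>V ^ 2 - 4 * y ^ 2\<bar> \<le> 6 * y"
    by simp
qed

lemma cube_main_term_estimate:
  fixes n c \<tau> V :: real
  assumes n1: "n \<ge> 1" and c1: "c \<ge> 1" and c2: "c \<le> 2 * n" and t0: "0 \<le> \<tau>" and t1: "\<tau> \<le> 1 / c"
    and V: "\<bar>V - 2 * n / c\<bar> \<le> 1" and V0: "V \<ge> 0"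
  shows "\<bar>(2 * n + 1) ^ 3 * \<tau> * V ^ 2 - (2 * n) ^ 5 * \<tau> / c ^ 2\<bar> \<le> 238 * n ^ 4 / c ^ 2"
proof -
  define y where "y = n / c"
  define M where "M = 2 * n + 1"
  have y: "y \<ge> 1 / 2"
    unfolding y_def using c1 c2 by (simp add: field_simps)
  have dV: "\<bar>V ^ 2 - 4 * y ^ 2\<bar> \<le> 6 * y"
    using square_near_double(2)[OF _ y V0] V by (simp add: y_def)
  have M: "0 \<le> M" "M \<le> 3 * n"
    unfolding M_def using n1 by simp_all
  have "M ^ 3 * \<tau> \<le> (3 * n) ^ 3 * (1 / c)"
    using M t0 t1 by (intro mult_mono power_mono) auto
  then have Mt: "M ^ 3 * \<tau> \<le> 27 * n ^ 3 / c"
    by (simp add: power3_eq_cube)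
  have "\<bar>M ^ 3 * \<tau> * (V ^ 2 - 4 * y ^ 2)\<bar> = M ^ 3 * \<tau> * \<bar>V ^ 2 - 4 * y ^ 2\<bar>"
    using M t0 by (simp add: abs_mult)
  also have "\<dots> \<le> (27 * n ^ 3 / c) * (6 * y)"
    using Mt dV M t0 n1 c1 by (intro mult_mono) auto
  also have "\<dots> = 162 * (n ^ 2 * y ^ 2)"
    unfolding y_def by (simp add: power2_eq_square power3_eq_cube)
  finally have first: "\<bar>M ^ 3 * \<tau> * (V ^ 2 - 4 * y ^ 2)\<bar> \<le> 162 * (n ^ 2 * y ^ 2)" .
  have m: "M ^ 3 - 8 * n ^ 3 = 12 * n ^ 2 + 6 * n + 1"
    unfolding M_def by (simp add: power2_eq_square power3_eq_cube algebra_simps)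
  have "n \<le> n * n"
    using n1 by (simp add: mult_le_cancel_left1)
  then have D: "M ^ 3 - 8 * n ^ 3 \<le> 19 * n ^ 2" "0 \<le> M ^ 3 - 8 * n ^ 3"
    using n1 unfolding m power2_eq_square by linarith+
  have "\<tau> \<le> 1"
    using t1 c1 order_trans[of \<tau> "1 / c" 1] by simp
  have "\<bar>4 * y ^ 2 * \<tau> * (M ^ 3 - 8 * n ^ 3)\<bar> = (4 * y ^ 2) * \<tau> * (M ^ 3 - 8 * n ^ 3)"
    using t0 D by (simp add: abs_mult)
  also have "\<dots> \<le> (4 * y ^ 2) * 1 * (19 * n ^ 2)"
    using \<open>\<tau> \<le> 1\<close> t0 D by (intro mult_mono) auto
  finally have second: "\<bar>4 * y ^ 2 * \<tau> * (M ^ 3 - 8 * n ^ 3)\<bar> \<le> 76 * (n ^ 2 * y ^ 2)"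
    by (simp add: mult.commute)
  have "M ^ 3 * \<tau> * V ^ 2 - (2 * n) ^ 5 * \<tau> / c ^ 2
      = M ^ 3 * \<tau> * (V ^ 2 - 4 * y ^ 2) + 4 * y ^ 2 * \<tau> * (M ^ 3 - 8 * n ^ 3)"
    unfolding y_def using c1 by (simp add: field_simps power_numeral_reduce)
  then have "\<bar>M ^ 3 * \<tau> * V ^ 2 - (2 * n) ^ 5 * \<tau> / c ^ 2\<bar> \<le> 238 * (n ^ 2 * y ^ 2)"
    using first second by (simp add: abs_triangle_ineq order_trans[OF abs_triangle_ineq])
  also have "\<dots> = 238 * n ^ 4 / c ^ 2"
    unfolding y_def by (simp add: field_simps power_numeral_reduce)
  finally show ?thesis
    unfolding M_def .
qed

lemma tent_corr_times_square_estimate: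
  fixes n c \<tau> T V :: real
  assumes n1: "n \<ge> 1" and c1: "c \<ge> 1" and c2: "c \<le> 2 * n" and t0: "0 \<le> \<tau>" and t1: "\<tau> \<le> 1 / c"
    and T: "\<bar>T - (2 * n + 1) ^ 3 * \<tau>\<bar> \<le> 2 * (2 * n + 1) ^ 2"
    and V: "\<bar>V - 2 * n / c\<bar> \<le> 1" and V0: "V \<ge> 0"
  shows "\<bar>T * V ^ 2 - (2 * n + 1) ^ 2 - (2 * n) ^ 5 * \<tau> / c ^ 2\<bar> \<le> 600 * n ^ 4 / c ^ 2"
proof -
  define y where "y = n / c"
  define M where "M = 2 * n + 1"
  have y: "y \<ge> 1 / 2"
    unfolding y_def using c1 c2 by (simp add: field_simps)
  have M3: "0 \<le> M" "M \<le> 3 * n"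
    unfolding M_def using n1 by simp_all
  have "\<bar>T - M ^ 3 * \<tau>\<bar> \<le> 2 * (3 * n) ^ 2"
    using T M3 unfolding M_def[symmetric] by (meson order_trans mult_left_mono power_mono zero_le_numeral)
  then have e: "\<bar>T - M ^ 3 * \<tau>\<bar> \<le> 18 * n ^ 2"
    by (simp add: power2_eq_square)
  have "V ^ 2 \<le> 16 * y ^ 2"
    using square_near_double(1)[OF _ y V0] V by (simp add: y_def)
  from mult_mono[OF e this _ zero_le_power2]
  have "\<bar>(T - M ^ 3 * \<tau>) * V ^ 2\<bar> \<le> (18 * n ^ 2) * (16 * y ^ 2)"
    by (simp add: abs_mult)
  then have "\<bar>(T - M ^ 3 * \<tau>) * V ^ 2\<bar> \<le> 288 * n ^ 4 / c ^ 2"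
    unfolding y_def by (simp add: field_simps power_numeral_reduce)
  moreover have "\<bar>M ^ 3 * \<tau> * V ^ 2 - (2 * n) ^ 5 * \<tau> / c ^ 2\<bar> \<le> 238 * n ^ 4 / c ^ 2"
    unfolding M_def by (rule cube_main_term_estimate[OF n1 c1 c2 t0 t1 V V0])
  moreover have "M ^ 2 \<le> 36 * n ^ 4 / c ^ 2"
  proof -
    have "M ^ 2 \<le> (3 * n) ^ 2"
      using M3 by (intro power_mono) auto
    moreover have "1 \<le> 4 * y ^ 2"
      using power_mono[OF y, of 2] by (simp add: power2_eq_square)
    ultimately have "M ^ 2 \<le> 36 * (n ^ 2 * y ^ 2)"
      using mult_left_mono[of 1 "4 * y ^ 2" "9 * n ^ 2"] by (simp add: power2_eq_square)
    then show ?thesis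
      unfolding y_def by (simp add: field_simps power_numeral_reduce)
  qed
  moreover have "T * V ^ 2 - M ^ 2 - (2 * n) ^ 5 * \<tau> / c ^ 2
      = (T - M ^ 3 * \<tau>) * V ^ 2 + (M ^ 3 * \<tau> * V ^ 2 - (2 * n) ^ 5 * \<tau> / c ^ 2) - M ^ 2"
    by (simp add: algebra_simps)
  moreover have "0 \<le> M ^ 2" "0 \<le> n ^ 4 / c ^ 2"
    by simp_all
  ultimately show ?thesis
    unfolding M_def[symmetric] abs_le_iff by (elim conjE) (intro conjI; linarith)
qed

lemma odd_div_approx:
  fixes n :: int and c :: nat
  assumes "c \<ge> 1"
  shows "\<bar>real_of_int (2 * (n div int c) + 1) - 2 * real_of_int n / real c\<bar> \<le> 1"
proof -
  have cp: "int c > 0"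
    using assms by simp
  have "real_of_int n = real c * real_of_int (n div int c) + real_of_int (n mod int c)"
    by (metis div_mult_mod_eq mult.commute of_int_add of_int_mult of_int_of_nat_eq)
  then have "real_of_int n / real c = real_of_int (n div int c) + real_of_int (n mod int c) / real c"
    using assms by (simp add: field_simps)
  moreover have "real_of_int (n mod int c) \<le> real_of_int (int c)"
    using pos_mod_bound[OF cp, of n] by linarith
  then have "0 \<le> real_of_int (n mod int c) / real c" "real_of_int (n mod int c) / real c \<le> 1"
    using cp by simp_all
  ultimately show ?thesis
    by (simp add: abs_le_iff)
qed

lemma ray_sum_estimate:
  fixes n :: int and k l :: nat
  assumes n: "n \<ge> 1" and k: "k \<ge> 1" and l: "l \<ge> 1" and c2: "int (max k l) \<le> 2 * n"
  shows "\<bar>real_of_int (ray_sum n (int k) (int l)) - (2 * real_of_int n) ^ 5 * pair_density k l\<bar>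
    \<le> 600 * real_of_int n ^ 4 / real (max k l) ^ 2"
proof -
  define c where "c = max k l"
  define d where "d = min k l"
  define \<tau> where "\<tau> = 1 / real c - real d / (3 * real c ^ 2)"
  define V where "V = 2 * (n div int c) + 1"
  have c1: "real c \<ge> 1" and cp: "int c > 0"
    using k unfolding c_def by simp_all
  have dc: "d \<le> c"
    unfolding c_def d_def by simp
  have density: "pair_density k l = \<tau> / real c ^ 2"
    unfolding pair_density_def \<tau>_def c_def[symmetric] d_def[symmetric] using c1
    by (simp add: field_simps power_numeral_reduce)
  have "real d / (3 * real c ^ 2) \<le> real c / (3 * real c ^ 2)"
    using dc by (simp add: divide_right_mono)
  also have "\<dots> \<le> 1 / real c"
    using c1 by (simp add: field_simps power2_eq_square)
  finally have t0: "0 \<le> \<tau>"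
    unfolding \<tau>_def by simp
  have t1: "\<tau> \<le> 1 / real c"
    unfolding \<tau>_def by simp
  have "tent_corr n (int k) (int l) = tent_corr n (int d) (int c)"
    unfolding d_def c_def by (cases "k \<le> l") (simp_all add: tent_corr_commute max_def min_def)
  moreover have "\<bar>real_of_int (tent_corr n (int d) (int c))
      - (2 * real_of_int n + 1) ^ 3 * (1 / real_of_int (int c) - real_of_int (int d) / (3 * real_of_int (int c) ^ 2))\<bar>
      \<le> 2 * (2 * real_of_int n + 1) ^ 2"
    by (rule tent_corr_estimate) (use n k l dc c2 in \<open>simp_all add: c_def d_def\<close>)
  ultimately have T: "\<bar>real_of_int (tent_corr n (int k) (int l)) - (2 * real_of_int n + 1) ^ 3 * \<tau>\<bar>
      \<le> 2 * (2 * real_of_int n + 1) ^ 2"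
    unfolding \<tau>_def of_int_of_nat_eq by (simp only:)
  have V: "\<bar>real_of_int V - 2 * real_of_int n / real c\<bar> \<le> 1"
    unfolding V_def using k by (intro odd_div_approx) (simp add: c_def)
  have V0: "real_of_int V \<ge> 0"
    unfolding V_def using n cp by (simp add: pos_imp_zdiv_nonneg_iff)
  have "real_of_int (ray_sum n (int k) (int l))
      = real_of_int (tent_corr n (int k) (int l)) * real_of_int V ^ 2 - (2 * real_of_int n + 1) ^ 2"
  proof -
    have "max (int k) (int l) = int c"
      unfolding c_def by linarith
    then show ?thesis
      using ray_sum_eq[of n "int k" "int l"] n k l unfolding V_def by simp
  qed
  moreover have "\<bar>real_of_int (tent_corr n (int k) (int l)) * real_of_int V ^ 2 - (2 * real_of_int n + 1) ^ 2
      - (2 * real_of_int n) ^ 5 * \<tau> / real c ^ 2\<bar> \<le> 600 * real_of_int n ^ 4 / real c ^ 2"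
    by (rule tent_corr_times_square_estimate[OF _ c1 _ t0 t1 T V V0]) (use n c2 in \<open>simp_all add: c_def\<close>)
  ultimately show ?thesis
    unfolding density c_def by simp
qed

lemma sum_ray_sums_estimate:
  assumes N: "N \<ge> 1"
  defines "Q \<equiv> coprime_pairs \<inter> {(k, l). max k l \<le> 2 * N}"
  shows "\<bar>(\<Sum>(k, l)\<in>Q. real_of_int (ray_sum (int N) (int k) (int l)))
      - (2 * real N) ^ 5 * (\<Sum>(k, l)\<in>Q. pair_density k l)\<bar>
    \<le> 1200 * real N ^ 4 * (1 + ln (2 * real N))"
proof -
  have "\<bar>(\<Sum>(k, l)\<in>Q. real_of_int (ray_sum (int N) (int k) (int l)))
      - (2 * real N) ^ 5 * (\<Sum>(k, l)\<in>Q. pair_density k l)\<bar>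
      = \<bar>\<Sum>(k, l)\<in>Q. real_of_int (ray_sum (int N) (int k) (int l)) - (2 * real N) ^ 5 * pair_density k l\<bar>"
    by (simp add: sum_subtractf sum_distrib_left case_prod_beta)
  also have "\<dots> \<le> (\<Sum>(k, l)\<in>Q.
      \<bar>real_of_int (ray_sum (int N) (int k) (int l)) - (2 * real N) ^ 5 * pair_density k l\<bar>)"
    by (rule order_trans[OF sum_abs]) (simp add: case_prod_beta)
  also have "\<dots> \<le> (\<Sum>(k, l)\<in>Q. 600 * real N ^ 4 / real (max k l) ^ 2)"
  proof (intro sum_mono, clarify)
    fix k l
    assume "(k, l) \<in> Q"
    then have "1 \<le> k" "1 \<le> l" "int (max k l) \<le> 2 * int N"
      unfolding Q_def coprime_pairs_def by auto
    then show "\<bar>real_of_int (ray_sum (int N) (int k) (int l)) - (2 * real N) ^ 5 * pair_density k l\<bar>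
        \<le> 600 * real N ^ 4 / real (max k l) ^ 2"
      using ray_sum_estimate[of "int N" k l] N by simp
  qed
  also have "\<dots> \<le> (\<Sum>(k, l)\<in>{1..2 * N} \<times> {1..2 * N}. 600 * real N ^ 4 / real (max k l) ^ 2)"
    by (intro sum_mono2) (auto simp: Q_def coprime_pairs_def)
  also have "\<dots> = 600 * real N ^ 4 * (\<Sum>(k, l)\<in>{1..2 * N} \<times> {1..2 * N}. 1 / real (max k l) ^ 2)"
    by (simp add: sum_distrib_left case_prod_beta)
  also have "\<dots> \<le> 600 * real N ^ 4 * (2 * harm (2 * N))"
    by (intro mult_left_mono sum_inverse_square_max_le_harm) simp
  also have "\<dots> = 1200 * real N ^ 4 * harm (2 * N)"
    by simp
  also have "\<dots> \<le> 1200 * real N ^ 4 * (1 + ln (2 * real N))"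
    using harm_le_one_plus_ln[of "2 * N"] N by (intro mult_left_mono) auto
  finally show ?thesis .
qed

lemma fifth_power_correction:
  fixes x :: real
  assumes "x \<ge> 1"
  shows "0 \<le> 2 * (2 * x + 1) ^ 5 - (2 * x + 1) ^ 2 - 2 * (2 * x) ^ 5"
    and "2 * (2 * x + 1) ^ 5 - (2 * x + 1) ^ 2 - 2 * (2 * x) ^ 5 \<le> 413 * x ^ 4"
proof -
  have e: "2 * (2 * x + 1) ^ 5 - (2 * x + 1) ^ 2 - 2 * (2 * x) ^ 5
      = 160 * x ^ 4 + 160 * x ^ 3 + 76 * x ^ 2 + 16 * x + 1"
    by (simp add: algebra_simps power_numeral_reduce)
  have "x \<le> x ^ 4" "x ^ 2 \<le> x ^ 4" "x ^ 3 \<le> x ^ 4"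
    using assms power_increasing[of 1 4 x] power_increasing[of 2 4 x] power_increasing[of 3 4 x] by simp_all
  moreover have "1 \<le> x ^ 4"
    using assms by (rule one_le_power)
  ultimately
  show "0 \<le> 2 * (2 * x + 1) ^ 5 - (2 * x + 1) ^ 2 - 2 * (2 * x) ^ 5"
    and "2 * (2 * x + 1) ^ 5 - (2 * x + 1) ^ 2 - 2 * (2 * x) ^ 5 \<le> 413 * x ^ 4"
    unfolding e using assms by simp_all
qed

section \<open>The asymptotic formula\<close>

lemma commuting_count_2_error_bound:
  assumes "N \<ge> 1"
  shows "\<bar>real (commuting_count TYPE(2) N) - (10 * zeta_real 2 / (3 * zeta_real 3)) * (2 * real N) ^ 5\<bar>
    \<le> 467 * real N ^ 4 + 2400 * (real N ^ 4 * (1 + ln (2 * real N)))"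
proof -
  define x where "x = real N"
  define Q where "Q = coprime_pairs \<inter> {(k, l). max k l \<le> 2 * N}"
  define main where "main = 2 * (2 * x + 1) ^ 5 - (2 * x + 1) ^ 2 - 2 * (2 * x) ^ 5"
  define ray where "ray = (\<Sum>(k, l)\<in>Q. real_of_int (ray_sum (int N) (int k) (int l)))
    - (2 * x) ^ 5 * (\<Sum>(k, l)\<in>Q. pair_density k l)"
  define tail where "tail = coprime_density - (\<Sum>(k, l)\<in>Q. pair_density k l)"
  have x: "x \<ge> 1"
    using assms by (simp add: x_def)
  have "real (commuting_count TYPE(2) N) - (10 * zeta_real 2 / (3 * zeta_real 3)) * (2 * x) ^ 5
      = main + 2 * ray - 2 * (2 * x) ^ 5 * tail"
    unfolding commuting_count_2_eq_ray_sums zeta_ratio_eq_coprime_density main_def ray_def tail_def Q_def x_def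
    by (simp add: algebra_simps)
  moreover have "0 \<le> main" "main \<le> 413 * x ^ 4"
    unfolding main_def using fifth_power_correction x by simp_all
  moreover have ray: "\<bar>ray\<bar> \<le> 1200 * (x ^ 4 * (1 + ln (2 * x)))"
    using sum_ray_sums_estimate[OF assms] unfolding ray_def Q_def x_def by simp
  moreover have "0 \<le> 2 * (2 * x) ^ 5 * tail"
    using coprime_density_truncation(1)[of "2 * N"] assms unfolding tail_def Q_def x_def by simp
  moreover have "2 * (2 * x) ^ 5 * tail \<le> 54 * x ^ 4"
  proof -
    have "2 * (2 * x) ^ 5 * tail \<le> 2 * (2 * x) ^ 5 * (5 / (3 * (2 * x)))"
      using coprime_density_truncation(2)[of "2 * N"] assms unfolding tail_def Q_def x_def
      by (intro mult_left_mono) auto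
    also have "\<dots> \<le> 54 * x ^ 4"
      using x by (simp add: field_simps power_numeral_reduce)
    finally show ?thesis .
  qed
  ultimately show ?thesis
    using abs_le_D1[OF ray] abs_le_D2[OF ray] unfolding x_def[symmetric]
    by (intro abs_leI) linarith+
qed

theorem theorem1p2:
  shows "\<exists>C. \<forall>N::nat. N > 1 \<longrightarrow>
    \<bar>real (commuting_count TYPE(2) N)
       - (10 * zeta_real 2 / (3 * zeta_real 3)) * (2 * real N) ^ 5\<bar>
      \<le> C * real N ^ 4 * ln (real N)"
proof (intro exI allI impI)
  fix N :: nat
  assume "N > 1"
  define x where "x = real N"
  have "1 / 2 \<le> ln (2 :: real)"
    using ln_le_minus_one[of "1 / 2 :: real"] by (simp add: ln_div)
  moreover have "ln 2 \<le> ln x"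
    using \<open>N > 1\<close> by (simp add: x_def)
  ultimately have "x ^ 4 * 1 \<le> x ^ 4 * (2 * ln x)"
    by (intro mult_left_mono) auto
  moreover have "x ^ 4 * (2 * ln x) = 2 * (x ^ 4 * ln x)"
    by (rule mult.left_commute)
  moreover have "0 \<le> x ^ 4"
    by (simp add: x_def)
  moreover have "x ^ 4 * (1 + ln (2 * x)) \<le> x ^ 4 * (2 + ln x)"
    using ln_2_less_1 \<open>N > 1\<close> by (intro mult_left_mono) (simp_all add: x_def ln_mult)
  moreover have "x ^ 4 * (2 + ln x) = 2 * x ^ 4 + x ^ 4 * ln x"
    by (simp add: algebra_simps)
  ultimately have "467 * x ^ 4 + 2400 * (x ^ 4 * (1 + ln (2 * x))) \<le> 20000 * (x ^ 4 * ln x)"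
    by linarith
  with commuting_count_2_error_bound[of N] \<open>N > 1\<close>
  show "\<bar>real (commuting_count TYPE(2) N) - (10 * zeta_real 2 / (3 * zeta_real 3)) * (2 * real N) ^ 5\<bar>
      \<le> 20000 * real N ^ 4 * ln (real N)"
    unfolding x_def by (simp add: mult.assoc)
qed

end
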